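(* Let $\mathcal{C}_1$ and $\mathcal{C}_2$ be nice GFG-tNCWs with $L(\mathcal{C}_1)=L(\mathcal{C}_2)$, each minimal (no GFG-tNCW for the same language has fewer states) and each $\alpha$-maximal up to homogeneity. Then $\mathcal{C}_1$ and $\mathcal{C}_2$ are isomorphic.
   Context: A tNCW is $\mathcal{A}=\langle\Sigma,Q,q_0,\delta,\alpha\rangle$: finite alphabet $\Sigma$, finite state set $Q$, initial state $q_0$, transition function $\delta:Q\times\Sigma\to 2^Q\setminus\{\emptyset\}$ with transition relation $\Delta=\{\langle q,\sigma,s\rangle:s\in\delta(q,\sigma)\}$, and $\alpha\subseteq\Delta$; $|\mathcal{A}|=|Q|$. $\alpha$-transitions are those in $\alpha$, $\bar\alpha$-transitions those in $\Delta\setminus\alpha$; $\delta^{\alpha}(q,\sigma)$, $\delta^{\bar\alpha}(q,\sigma)$ denote the $\sigma$-successors via $\alpha$-, resp. $\bar\alpha$-transitions. A run on $w=\sigma_1\sigma_2\cdots$ is $r_0r_1\cdots$ with $r_0=q_0$, $r_{i+1}\in\delta(r_i,\sigma_{i+1})$; accepting iff it traverses $\alpha$-transitions only finitely often; $L(\mathcal{A})$ is the accepted language. $\mathcal{A}^q$ is $\mathcal{A}$ with initial state $q$; $q\sim s$ iff $L(\mathcal{A}^q)=L(\mathcal{A}^s)$. $\mathcal{A}$ is GFG if there is $f:\Sigma^*\to Q$ with $f(\epsilon)=q_0$, $\langle f(u),\sigma,f(u\sigma)\rangle\in\Delta$ for all $u,\sigma$, and for every $w\in L(\mathcal{A})$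 the run $f(w[1,0]),f(w[1,1]),\dots$ is accepting; $q$ is GFG if $\mathcal{A}^q$ is. $\mathcal{A}$ is semantically deterministic if all $\sigma$-successors of any state are pairwise $\sim$-equivalent; safe deterministic if $|\delta^{\bar\alpha}(q,\sigma)|\le1$ always; normal if whenever a path of $\bar\alpha$-transitions leads from $q$ to $s$, one also leads from $s$ to $q$. Nice: all states reachable and GFG, and normal, safe deterministic, semantically deterministic. $\mathcal{A}$ is $\alpha$-homogenous if for all $q,\sigma$, $\delta^{\alpha}(q,\sigma)=\emptyset$ or $\delta^{\bar\alpha}(q,\sigma)=\emptyset$. A triple $\langle q,\sigma,s\rangle\in Q\times\Sigma\times Q$ is an allowed transition of $\mathcal{A}$ if there is $s'$ with $s\sim s'$ and $\langle q,\sigma,s'\rangle\in\Delta$. $\mathcal{A}$ is $\alpha$-maximal up to homogeneity if it is $\alpha$-homogenous and, for every $q\in Q$ and $\sigma\in\Sigma$ with $\delta^{\bar\alpha}(q,\sigma)=\emptyset$, every allowed transition in $\{q\}\times\{\sigma\}\times Q$ is in $\Delta$. For tNCWs $\mathcal{A},\mathcal{B}$, a bijection $\kappa:Q_\mathcal{A}\to Q_\mathcal{B}$ is $\bar\alpha$-transition respecting if for all $q,q',\sigma$: $q'\in\delta^{\bar\alpha}_\mathcal{A}(q,\sigma)$ iff $\kappa(q')\in\delta^{\bar\alpha}_\mathcal{B}(\kappa(q),\sigma)$, and $\alpha$-transition respecting if the same holds with $\delta^{\alpha}$. $\mathcal{A},\mathcal{B}$ are isomorphic if some bijection is both $\alpha$-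 and $\bar\alpha$-transition respecting. *)

theory Defs
  imports Main
begin

record ('q, 'a) tNCW =
  alph   :: "'a set"
  states :: "'q set"
  init   :: 'q
  trans  :: "'q \<Rightarrow> 'a \<Rightarrow> 'q set"
  acc    :: "('q \<times> 'a \<times> 'q) set"

definition Delta :: "('q, 'a) tNCW \<Rightarrow> ('q \<times> 'a \<times> 'q) set" where
  "Delta A = {(q, \<sigma>, s). q \<in> states A \<and> \<sigma> \<in> alph A \<and> s \<in> trans A q \<sigma>}"

definition wf_tNCW :: "('q, 'a) tNCW \<Rightarrow> bool" where
  "wf_tNCW A \<longleftrightarrow> finite (alph A) \<and> finite (states A) \<and> init A \<in> states A \<and>
     (\<forall>q \<in> states A. \<forall>\<sigma> \<in> alph A. trans A q \<sigma> \<noteq> {} \<and> trans A q \<sigma> \<subseteq> states A) \<and>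
     acc A \<subseteq> Delta A"

definition delta_acc :: "('q, 'a) tNCW \<Rightarrow> 'q \<Rightarrow> 'a \<Rightarrow> 'q set" where
  "delta_acc A q \<sigma> = {s. s \<in> trans A q \<sigma> \<and> (q, \<sigma>, s) \<in> acc A}"

definition delta_nacc :: "('q, 'a) tNCW \<Rightarrow> 'q \<Rightarrow> 'a \<Rightarrow> 'q set" where
  "delta_nacc A q \<sigma> = {s. s \<in> trans A q \<sigma> \<and> (q, \<sigma>, s) \<notin> acc A}"

definition is_word :: "('q, 'a) tNCW \<Rightarrow> (nat \<Rightarrow> 'a) \<Rightarrow> bool" where
  "is_word A w \<longleftrightarrow> (\<forall>i. w i \<in> alph A)"

definition is_run :: "('q, 'a) tNCW \<Rightarrow> (nat \<Rightarrow> 'a) \<Rightarrow> (nat \<Rightarrow> 'q) \<Rightarrow> bool" where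
  "is_run A w r \<longleftrightarrow> r 0 = init A \<and> (\<forall>i. r (Suc i) \<in> trans A (r i) (w i))"

definition accepting :: "('q, 'a) tNCW \<Rightarrow> (nat \<Rightarrow> 'a) \<Rightarrow> (nat \<Rightarrow> 'q) \<Rightarrow> bool" where
  "accepting A w r \<longleftrightarrow> finite {i. (r i, w i, r (Suc i)) \<in> acc A}"

definition lang :: "('q, 'a) tNCW \<Rightarrow> (nat \<Rightarrow> 'a) set" where
  "lang A = {w. is_word A w \<and> (\<exists>r. is_run A w r \<and> accepting A w r)}"

definition from_state :: "('q, 'a) tNCW \<Rightarrow> 'q \<Rightarrow> ('q, 'a) tNCW" where
  "from_state A q = A\<lparr>init := q\<rparr>"

definition equiv_st :: "('q, 'a) tNCW \<Rightarrow> 'q \<Rightarrow> 'q \<Rightarrow> bool" where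
  "equiv_st A q s \<longleftrightarrow> lang (from_state A q) = lang (from_state A s)"

definition prefix :: "(nat \<Rightarrow> 'a) \<Rightarrow> nat \<Rightarrow> 'a list" where
  "prefix w i = map w [0..<i]"

definition GFG :: "('q, 'a) tNCW \<Rightarrow> bool" where
  "GFG A \<longleftrightarrow> (\<exists>f :: 'a list \<Rightarrow> 'q.
     f [] = init A \<and>
     (\<forall>u \<in> lists (alph A). \<forall>\<sigma> \<in> alph A. (f u, \<sigma>, f (u @ [\<sigma>])) \<in> Delta A) \<and>
     (\<forall>w \<in> lang A. accepting A w (\<lambda>i. f (prefix w i))))"

definition GFG_state :: "('q, 'a) tNCW \<Rightarrow> 'q \<Rightarrow> bool" where
  "GFG_state A q \<longleftrightarrow> GFG (from_state A q)"

definition sem_det :: "('q, 'a) tNCW \<Rightarrow> bool" where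
  "sem_det A \<longleftrightarrow> (\<forall>q \<in> states A. \<forall>\<sigma> \<in> alph A. \<forall>s \<in> trans A q \<sigma>. \<forall>s' \<in> trans A q \<sigma>.
      equiv_st A s s')"

definition safe_det :: "('q, 'a) tNCW \<Rightarrow> bool" where
  "safe_det A \<longleftrightarrow> (\<forall>q \<in> states A. \<forall>\<sigma> \<in> alph A. card (delta_nacc A q \<sigma>) \<le> 1)"

definition nacc_step :: "('q, 'a) tNCW \<Rightarrow> ('q \<times> 'q) set" where
  "nacc_step A = {(q, s). q \<in> states A \<and> (\<exists>\<sigma> \<in> alph A. s \<in> delta_nacc A q \<sigma>)}"

definition normal :: "('q, 'a) tNCW \<Rightarrow> bool" where
  "normal A \<longleftrightarrow> (\<forall>q s. (q, s) \<in> (nacc_step A)\<^sup>* \<longrightarrow> (s, q) \<in> (nacc_step A)\<^sup>*)"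

definition reachable :: "('q, 'a) tNCW \<Rightarrow> 'q \<Rightarrow> bool" where
  "reachable A q \<longleftrightarrow>
     (init A, q) \<in> {(p, s). p \<in> states A \<and> (\<exists>\<sigma> \<in> alph A. s \<in> trans A p \<sigma>)}\<^sup>*"

definition nice :: "('q, 'a) tNCW \<Rightarrow> bool" where
  "nice A \<longleftrightarrow> (\<forall>q \<in> states A. reachable A q \<and> GFG_state A q) \<and>
     normal A \<and> safe_det A \<and> sem_det A"

text \<open>Competitors are taken with state type nat, which is no loss of generality
since every finite state set can be renamed injectively into nat.\<close>
definition minimal_GFG :: "('q, 'a) tNCW \<Rightarrow> bool" where
  "minimal_GFG A \<longleftrightarrow> GFG A \<and>
     \<not> (\<exists>B :: (nat, 'a) tNCW. wf_tNCW B \<and> alph B = alph A \<and> GFG B \<and>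
          lang B = lang A \<and> card (states B) < card (states A))"

definition alpha_homogenous :: "('q, 'a) tNCW \<Rightarrow> bool" where
  "alpha_homogenous A \<longleftrightarrow> (\<forall>q \<in> states A. \<forall>\<sigma> \<in> alph A.
      delta_acc A q \<sigma> = {} \<or> delta_nacc A q \<sigma> = {})"

definition allowed :: "('q, 'a) tNCW \<Rightarrow> 'q \<Rightarrow> 'a \<Rightarrow> 'q \<Rightarrow> bool" where
  "allowed A q \<sigma> s \<longleftrightarrow> q \<in> states A \<and> \<sigma> \<in> alph A \<and> s \<in> states A \<and>
      (\<exists>s'. equiv_st A s s' \<and> (q, \<sigma>, s') \<in> Delta A)"

definition alpha_maximal_uth :: "('q, 'a) tNCW \<Rightarrow> bool" where
  "alpha_maximal_uth A \<longleftrightarrow> alpha_homogenous A \<and>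
     (\<forall>q \<in> states A. \<forall>\<sigma> \<in> alph A. delta_nacc A q \<sigma> = {} \<longrightarrow>
        (\<forall>s \<in> states A. allowed A q \<sigma> s \<longrightarrow> (q, \<sigma>, s) \<in> Delta A))"

definition isomorphic :: "('q1, 'a) tNCW \<Rightarrow> ('q2, 'a) tNCW \<Rightarrow> bool" where
  "isomorphic A B \<longleftrightarrow> (\<exists>\<kappa>. bij_betw \<kappa> (states A) (states B) \<and>
     (\<forall>q \<in> states A. \<forall>q' \<in> states A. \<forall>\<sigma> \<in> alph A.
        (q' \<in> delta_nacc A q \<sigma> \<longleftrightarrow> \<kappa> q' \<in> delta_nacc B (\<kappa> q) \<sigma>) \<and>
        (q' \<in> delta_acc A q \<sigma> \<longleftrightarrow> \<kappa> q' \<in> delta_acc B (\<kappa> q) \<sigma>)))"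

end

theory Submission
  imports Defs "HOL-Library.Omega_Words_Fun"
begin

text \<open>
  Write q \<le> s when q and s have the same language and every word with a safe run (one
  avoiding \<alpha>-transitions) from q also has one from s; call q and s strongly equivalent if
  also s \<le> q. In a minimal nice GFG-tNCW distinct states are never strongly equivalent, and
  q \<le> s forces s to be safely reachable from q: otherwise redirecting transitions into a
  proper subset of the states yields a smaller GFG automaton for the same language.
  For two such automata with the same language, playing the GFG strategy of one against safe
  runs of the other shows that some safe descendant of each state is dominated by a state of
  the other automaton, and a maximality argument upgrades this to a strongly equivalent
  partner. Strong equivalence is then a bijection preserving safe transitions, and
  \<alpha>-maximality makes the \<alpha>-transitions a function of the languages, so it is an
  isomorphism.
\<close>

(* Defs has its own prefix function; the name prefix refers to Omega_Words_Fun's. *)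

lemma Defs_prefix_eq_prefix: "Defs.prefix w i = prefix i w"
  by (simp add: Defs.prefix_def subsequence_def)

lemma is_word_iff_range: "is_word A w \<longleftrightarrow> range w \<subseteq> alph A"
  by (auto simp: is_word_def)

lemma is_word_build [simp]: "is_word A (\<sigma> ## w) \<longleftrightarrow> \<sigma> \<in> alph A \<and> is_word A w"
  by (simp add: is_word_iff_range)

lemma is_word_suffix: "is_word A w \<Longrightarrow> is_word A (suffix n w)"
  by (simp add: is_word_def)

lemma is_word_prefix: "is_word A w \<Longrightarrow> prefix n w \<in> lists (alph A)"
  by (auto simp: is_word_def)

lemma accepting_iff_MOST: "accepting A w r \<longleftrightarrow> (MOST i. (r i, w i, r (Suc i)) \<notin> acc A)"
  by (simp add: accepting_def MOST_iff_cofinite)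

lemma accepting_build [simp]: "accepting A (\<sigma> ## w) (q ## r) \<longleftrightarrow> accepting A w r"
proof -
  have "accepting A (\<sigma> ## w) (q ## r) \<longleftrightarrow>
      (MOST i. ((q ## r) (Suc i), (\<sigma> ## w) (Suc i), (q ## r) (Suc (Suc i))) \<notin> acc A)"
    unfolding accepting_iff_MOST by (rule MOST_Suc_iff[symmetric])
  then show ?thesis by (simp add: accepting_iff_MOST)
qed

lemma wf_tNCW_init_in_states: "wf_tNCW A \<Longrightarrow> init A \<in> states A"
  by (simp add: wf_tNCW_def)

lemma wf_tNCW_trans_in_states:
  "wf_tNCW A \<Longrightarrow> q \<in> states A \<Longrightarrow> \<sigma> \<in> alph A \<Longrightarrow> s \<in> trans A q \<sigma> \<Longrightarrow> s \<in> states A"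
  unfolding wf_tNCW_def by blast

lemma wf_tNCW_delta_nacc_in_states:
  "wf_tNCW A \<Longrightarrow> q \<in> states A \<Longrightarrow> \<sigma> \<in> alph A \<Longrightarrow> delta_nacc A q \<sigma> \<subseteq> states A"
  unfolding wf_tNCW_def delta_nacc_def by blast

lemma wf_tNCW_trans_nonempty:
  "wf_tNCW A \<Longrightarrow> q \<in> states A \<Longrightarrow> \<sigma> \<in> alph A \<Longrightarrow> trans A q \<sigma> \<noteq> {}"
  unfolding wf_tNCW_def by blast

definition run_from :: "('q, 'a) tNCW \<Rightarrow> 'q \<Rightarrow> 'a word \<Rightarrow> 'q word \<Rightarrow> bool" where
  "run_from A q w r \<longleftrightarrow> r 0 = q \<and> (\<forall>i. r (Suc i) \<in> trans A (r i) (w i))"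

definition safe_run :: "('q, 'a) tNCW \<Rightarrow> 'q \<Rightarrow> 'a word \<Rightarrow> 'q word \<Rightarrow> bool" where
  "safe_run A q w r \<longleftrightarrow> r 0 = q \<and> (\<forall>i. r (Suc i) \<in> delta_nacc A (r i) (w i))"

definition state_lang :: "('q, 'a) tNCW \<Rightarrow> 'q \<Rightarrow> 'a word set" where
  "state_lang A q = lang (from_state A q)"

definition safe_lang :: "('q, 'a) tNCW \<Rightarrow> 'q \<Rightarrow> 'a word set" where
  "safe_lang A q = {w. is_word A w \<and> (\<exists>r. safe_run A q w r)}"

lemma mem_state_lang_iff:
  "w \<in> state_lang A q \<longleftrightarrow> is_word A w \<and> (\<exists>r. run_from A q w r \<and> accepting A w r)"
  by (simp add: state_lang_def lang_def is_run_def run_from_def from_state_def is_word_def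
      accepting_def)

lemma lang_eq_state_lang_init: "lang A = state_lang A (init A)"
  by (simp add: state_lang_def from_state_def)

lemma all_nat_iff_0_Suc: "(\<forall>i. P i) \<longleftrightarrow> P 0 \<and> (\<forall>i. P (Suc i))"
  by (metis not0_implies_Suc)

lemma run_from_build_iff:
  "run_from A q (\<sigma> ## w) (q ## r) \<longleftrightarrow> r 0 \<in> trans A q \<sigma> \<and> run_from A (r 0) w r"
  unfolding run_from_def by (subst all_nat_iff_0_Suc) simp

lemma safe_run_build_iff:
  "safe_run A q (\<sigma> ## w) (q ## r) \<longleftrightarrow> r 0 \<in> delta_nacc A q \<sigma> \<and> safe_run A (r 0) w r"
  unfolding safe_run_def by (subst all_nat_iff_0_Suc) simp

lemma build_mem_state_lang_iff:
  "\<sigma> ## w \<in> state_lang A q \<longleftrightarrow> \<sigma> \<in> alph A \<and> (\<exists>s \<in> trans A q \<sigma>. w \<in> state_lang A s)"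
proof
  assume "\<sigma> ## w \<in> state_lang A q"
  then obtain r where "is_word A (\<sigma> ## w)" "run_from A q (\<sigma> ## w) r" "accepting A (\<sigma> ## w) r"
    by (auto simp: mem_state_lang_iff)
  moreover from this(2) have "r = q ## suffix 1 r"
    using build_split[of r] by (simp add: run_from_def)
  ultimately show "\<sigma> \<in> alph A \<and> (\<exists>s \<in> trans A q \<sigma>. w \<in> state_lang A s)"
    by (metis is_word_build run_from_build_iff accepting_build mem_state_lang_iff)
next
  assume "\<sigma> \<in> alph A \<and> (\<exists>s \<in> trans A q \<sigma>. w \<in> state_lang A s)"
  then obtain r where "\<sigma> \<in> alph A" "r 0 \<in> trans A q \<sigma>" "is_word A w" "run_from A (r 0) w r"
    "accepting A w r"
    by (auto simp: mem_state_lang_iff run_from_def)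
  then show "\<sigma> ## w \<in> state_lang A q"
    by (auto simp: mem_state_lang_iff run_from_build_iff intro!: exI[of _ "q ## r"])
qed

lemma build_mem_safe_lang_iff:
  "\<sigma> ## w \<in> safe_lang A q \<longleftrightarrow> \<sigma> \<in> alph A \<and> (\<exists>s \<in> delta_nacc A q \<sigma>. w \<in> safe_lang A s)"
proof
  assume "\<sigma> ## w \<in> safe_lang A q"
  then obtain r where "is_word A (\<sigma> ## w)" "safe_run A q (\<sigma> ## w) r"
    by (auto simp: safe_lang_def)
  moreover from this(2) have "r = q ## suffix 1 r"
    using build_split[of r] by (simp add: safe_run_def)
  ultimately show "\<sigma> \<in> alph A \<and> (\<exists>s \<in> delta_nacc A q \<sigma>. w \<in> safe_lang A s)"
    by (metis (mono_tags, lifting) is_word_build safe_run_build_iff safe_lang_def mem_Collect_eq)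
next
  assume "\<sigma> \<in> alph A \<and> (\<exists>s \<in> delta_nacc A q \<sigma>. w \<in> safe_lang A s)"
  then obtain r where "\<sigma> \<in> alph A" "r 0 \<in> delta_nacc A q \<sigma>" "is_word A w" "safe_run A (r 0) w r"
    by (auto simp: safe_lang_def safe_run_def)
  then show "\<sigma> ## w \<in> safe_lang A q"
    by (auto simp: safe_lang_def safe_run_build_iff intro!: exI[of _ "q ## r"])
qed

lemma safe_lang_subset_state_lang: "safe_lang A q \<subseteq> state_lang A q"
proof
  fix w assume "w \<in> safe_lang A q"
  then obtain r where "is_word A w" "safe_run A q w r" by (auto simp: safe_lang_def)
  then show "w \<in> state_lang A q"
    by (auto simp: mem_state_lang_iff safe_run_def run_from_def delta_nacc_def accepting_def
        intro!: exI[of _ r])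
qed

fun path :: "('q, 'a) tNCW \<Rightarrow> 'q \<Rightarrow> 'a list \<Rightarrow> 'q \<Rightarrow> bool" where
  "path A p [] q \<longleftrightarrow> q = p"
| "path A p (\<sigma> # x) q \<longleftrightarrow> \<sigma> \<in> alph A \<and> (\<exists>s \<in> trans A p \<sigma>. path A s x q)"

fun safe_path :: "('q, 'a) tNCW \<Rightarrow> 'q \<Rightarrow> 'a list \<Rightarrow> 'q \<Rightarrow> bool" where
  "safe_path A p [] q \<longleftrightarrow> q = p"
| "safe_path A p (\<sigma> # x) q \<longleftrightarrow> \<sigma> \<in> alph A \<and> (\<exists>s \<in> delta_nacc A p \<sigma>. safe_path A s x q)"

lemma path_append: "path A p (x @ y) q \<longleftrightarrow> (\<exists>m. path A p x m \<and> path A m y q)"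
  by (induction x arbitrary: p) auto

lemma safe_path_append: "safe_path A p (x @ y) q \<longleftrightarrow> (\<exists>m. safe_path A p x m \<and> safe_path A m y q)"
  by (induction x arbitrary: p) auto

lemma path_snoc:
  "path A p (x @ [\<sigma>]) q \<longleftrightarrow> (\<exists>m. path A p x m \<and> \<sigma> \<in> alph A \<and> q \<in> trans A m \<sigma>)"
  by (simp add: path_append)

lemma safe_path_snoc:
  "safe_path A p (x @ [\<sigma>]) q \<longleftrightarrow> (\<exists>m. safe_path A p x m \<and> \<sigma> \<in> alph A \<and> q \<in> delta_nacc A m \<sigma>)"
  by (simp add: safe_path_append)

lemma safe_path_imp_path: "safe_path A p x q \<Longrightarrow> path A p x q"
  by (induction x arbitrary: p) (auto simp: delta_nacc_def)

lemma path_lists: "path A p x q \<Longrightarrow> x \<in> lists (alph A)"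
  by (induction x arbitrary: p) auto

lemma path_in_states: "wf_tNCW A \<Longrightarrow> p \<in> states A \<Longrightarrow> path A p x q \<Longrightarrow> q \<in> states A"
  by (induction x arbitrary: p) (auto simp: wf_tNCW_def)

lemma safe_path_in_states: "wf_tNCW A \<Longrightarrow> p \<in> states A \<Longrightarrow> safe_path A p x q \<Longrightarrow> q \<in> states A"
  using path_in_states safe_path_imp_path by metis

lemma path_exists:
  "wf_tNCW A \<Longrightarrow> p \<in> states A \<Longrightarrow> x \<in> lists (alph A) \<Longrightarrow> \<exists>q. path A p x q"
proof (induction x arbitrary: p)
  case Nil
  show ?case by (rule exI[of _ p]) simp
next
  case (Cons \<sigma> x)
  then obtain s where "s \<in> trans A p \<sigma>" "s \<in> states A"
    using wf_tNCW_trans_nonempty wf_tNCW_trans_in_states by (metis all_not_in_conv listsE)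
  moreover obtain q where "path A s x q"
    using Cons.IH[OF Cons.prems(1) \<open>s \<in> states A\<close>] Cons.prems(3) by auto
  ultimately
  show ?case using Cons.prems(3) by auto
qed

lemma run_from_path:
  "run_from A p w r \<Longrightarrow> is_word A w \<Longrightarrow> path A p (prefix n w) (r n)"
  by (induction n) (auto simp: run_from_def path_snoc is_word_def)

lemma run_from_in_states:
  "wf_tNCW A \<Longrightarrow> q \<in> states A \<Longrightarrow> is_word A w \<Longrightarrow> run_from A q w r \<Longrightarrow> r i \<in> states A"
  using path_in_states run_from_path by metis

lemma safe_run_safe_path:
  "safe_run A p w r \<Longrightarrow> is_word A w \<Longrightarrow> safe_path A p (prefix n w) (r n)"
  by (induction n) (auto simp: safe_run_def safe_path_snoc is_word_def)

lemma safe_run_in_states: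
  "wf_tNCW A \<Longrightarrow> q \<in> states A \<Longrightarrow> is_word A w \<Longrightarrow> safe_run A q w r \<Longrightarrow> r i \<in> states A"
  using safe_path_in_states safe_run_safe_path by metis

lemma eventually_safe_suffix:
  assumes "run_from A q w r" "accepting A w r" "is_word A w"
  obtains m where "\<And>i. m \<le> i \<Longrightarrow> suffix i w \<in> safe_lang A (r i)"
proof -
  obtain m where m: "\<And>i. m \<le> i \<Longrightarrow> (r i, w i, r (Suc i)) \<notin> acc A"
    using assms(2) by (auto simp: accepting_iff_MOST MOST_nat_le)
  have "safe_run A (r i) (suffix i w) (suffix i r)" if "m \<le> i" for i
    using assms(1) m that by (auto simp: safe_run_def run_from_def delta_nacc_def)
  then show thesis
    using that[of m] assms(3) by (auto simp: safe_lang_def is_word_suffix)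
qed

lemma conc_mem_safe_lang_iff:
  "x \<frown> w \<in> safe_lang A p \<longleftrightarrow> (\<exists>q. safe_path A p x q \<and> w \<in> safe_lang A q)"
  by (induction x arbitrary: p) (auto simp: build_mem_safe_lang_iff)

lemma rtrancl_nacc_step_iff_safe_path:
  assumes "wf_tNCW A" "p \<in> states A"
  shows "(p, q) \<in> (nacc_step A)\<^sup>* \<longleftrightarrow> (\<exists>x. safe_path A p x q)"
proof
  assume "(p, q) \<in> (nacc_step A)\<^sup>*"
  then show "\<exists>x. safe_path A p x q"
  proof (induction rule: converse_rtrancl_induct)
    case base
    show ?case by (rule exI[of _ "[]"]) simp
  next
    case (step p s)
    then obtain x \<sigma> where "safe_path A s x q" "\<sigma> \<in> alph A" "s \<in> delta_nacc A p \<sigma>"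
      by (auto simp: nacc_step_def)
    then have "safe_path A p (\<sigma> # x) q" by auto
    then show ?case ..
  qed
next
  assume "\<exists>x. safe_path A p x q"
  then obtain x where "safe_path A p x q" ..
  then show "(p, q) \<in> (nacc_step A)\<^sup>*"
    using assms(2)
  proof (induction x arbitrary: p)
    case (Cons \<sigma> x)
    then obtain s where "\<sigma> \<in> alph A" "s \<in> delta_nacc A p \<sigma>" "safe_path A s x q" by auto
    moreover from this have "s \<in> states A"
      using wf_tNCW_delta_nacc_in_states[OF assms(1) Cons.prems(2)] by blast
    ultimately have "(p, s) \<in> nacc_step A" "(s, q) \<in> (nacc_step A)\<^sup>*"
      using Cons.IH Cons.prems(2) by (auto simp: nacc_step_def)
    then show ?case by (rule converse_rtrancl_into_rtrancl)
  qed simp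
qed

lemma reachable_imp_path:
  assumes "reachable A q"
  shows "\<exists>x. path A (init A) x q"
proof -
  have "(init A, q) \<in> {(p, s). p \<in> states A \<and> (\<exists>\<sigma> \<in> alph A. s \<in> trans A p \<sigma>)}\<^sup>*"
    using assms by (simp add: reachable_def)
  then show ?thesis
  proof (induction rule: converse_rtrancl_induct)
    case base
    show ?case by (rule exI[of _ "[]"]) simp
  next
    case (step p s)
    then obtain x \<sigma> where "path A s x q" "\<sigma> \<in> alph A" "s \<in> trans A p \<sigma>" by blast
    then have "path A p (\<sigma> # x) q" by auto
    then show ?case ..
  qed
qed

section \<open>Semantic and safe determinism\<close>

lemma sem_det_successors_state_lang_eq:
  "sem_det A \<Longrightarrow> q \<in> states A \<Longrightarrow> \<sigma> \<in> alph A \<Longrightarrow> s \<in> trans A q \<sigma> \<Longrightarrow> s' \<in> trans A q \<sigma> \<Longrightarrow>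
    state_lang A s = state_lang A s'"
  unfolding sem_det_def equiv_st_def state_lang_def by blast

lemma path_conc_mem_state_lang:
  assumes "wf_tNCW A" "sem_det A" "p \<in> states A" "path A p x q"
  shows "x \<frown> w \<in> state_lang A p \<longleftrightarrow> w \<in> state_lang A q"
  using assms(3,4)
proof (induction x arbitrary: p)
  case (Cons \<sigma> x)
  then obtain s where s: "\<sigma> \<in> alph A" "s \<in> trans A p \<sigma>" "path A s x q" by auto
  have "s \<in> states A" using wf_tNCW_trans_in_states[OF assms(1) Cons.prems(1) s(1,2)] .
  have eq: "state_lang A s' = state_lang A s" if "s' \<in> trans A p \<sigma>" for s'
    using sem_det_successors_state_lang_eq[OF assms(2) Cons.prems(1) s(1) that s(2)] .
  have "(\<sigma> # x) \<frown> w \<in> state_lang A p \<longleftrightarrow> (\<exists>s' \<in> trans A p \<sigma>. x \<frown> w \<in> state_lang A s')"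
    using s(1) by (simp add: build_mem_state_lang_iff)
  also have "\<dots> \<longleftrightarrow> x \<frown> w \<in> state_lang A s"
    using s(2) eq by blast
  finally show ?case using Cons.IH[OF \<open>s \<in> states A\<close> s(3)] by simp
qed simp

lemma path_state_lang_eq:
  assumes "wf_tNCW A" "sem_det A" "wf_tNCW B" "sem_det B"
    and "a \<in> states A" "b \<in> states B" "state_lang A a = state_lang B b"
    and "path A a x a'" "path B b x b'"
  shows "state_lang A a' = state_lang B b'"
proof (rule set_eqI)
  fix w
  have "w \<in> state_lang A a' \<longleftrightarrow> x \<frown> w \<in> state_lang A a"
    using path_conc_mem_state_lang[OF assms(1,2,5,8)] by simp
  also have "\<dots> \<longleftrightarrow> x \<frown> w \<in> state_lang B b"
    using assms(7) by simp
  also have "\<dots> \<longleftrightarrow> w \<in> state_lang B b'"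
    using path_conc_mem_state_lang[OF assms(3,4,6,9)] by simp
  finally show "w \<in> state_lang A a' \<longleftrightarrow> w \<in> state_lang B b'" .
qed

corollary successor_state_lang_eq:
  assumes "wf_tNCW A" "sem_det A" "wf_tNCW B" "sem_det B"
    and "a \<in> states A" "b \<in> states B" "state_lang A a = state_lang B b"
    and "\<sigma> \<in> alph A" "\<sigma> \<in> alph B" "s \<in> trans A a \<sigma>" "t \<in> trans B b \<sigma>"
  shows "state_lang A s = state_lang B t"
  using path_state_lang_eq[OF assms(1-7), of "[\<sigma>]"] assms(8-11) by auto

lemma safe_det_successor_unique:
  assumes "wf_tNCW A" "safe_det A" "q \<in> states A" "\<sigma> \<in> alph A"
    and "s \<in> delta_nacc A q \<sigma>" "t \<in> delta_nacc A q \<sigma>"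
  shows "s = t"
proof -
  have "finite (delta_nacc A q \<sigma>)"
    using wf_tNCW_delta_nacc_in_states[OF assms(1,3,4)] assms(1)
    by (auto simp: wf_tNCW_def intro: finite_subset)
  moreover have "card (delta_nacc A q \<sigma>) \<le> 1"
    using assms(2-4) by (simp add: safe_det_def)
  ultimately show ?thesis using assms(5,6) card_le_Suc0_iff_eq by auto
qed

lemma safe_path_unique:
  "wf_tNCW A \<Longrightarrow> safe_det A \<Longrightarrow> p \<in> states A \<Longrightarrow> safe_path A p x q \<Longrightarrow> safe_path A p x q' \<Longrightarrow>
    q = q'"
proof (induction x arbitrary: p)
  case (Cons \<sigma> x)
  then obtain s s' where "\<sigma> \<in> alph A" "s \<in> delta_nacc A p \<sigma>" "safe_path A s x q"
    "s' \<in> delta_nacc A p \<sigma>" "safe_path A s' x q'"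
    by auto
  moreover from this have "s = s'" "s \<in> states A"
    using safe_det_successor_unique[OF Cons.prems(1-3)]
      wf_tNCW_delta_nacc_in_states[OF Cons.prems(1,3)] by blast+
  ultimately show ?case using Cons.IH Cons.prems(1,2) by blast
qed simp

lemma safe_path_conc_mem_safe_lang:
  assumes "wf_tNCW A" "safe_det A" "p \<in> states A" "safe_path A p x q"
  shows "x \<frown> w \<in> safe_lang A p \<longleftrightarrow> w \<in> safe_lang A q"
  using conc_mem_safe_lang_iff[of x w A p] safe_path_unique[OF assms(1-3)] assms(4) by blast

corollary safe_successor_build_mem_safe_lang:
  assumes "wf_tNCW A" "safe_det A" "q \<in> states A" "\<sigma> \<in> alph A" "s \<in> delta_nacc A q \<sigma>"
  shows "\<sigma> ## w \<in> safe_lang A q \<longleftrightarrow> w \<in> safe_lang A s"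
  using safe_path_conc_mem_safe_lang[OF assms(1-3), of "[\<sigma>]" s w] assms(4,5) by simp

lemma safe_langI_prefixes:
  assumes "wf_tNCW A" "safe_det A" "p \<in> states A" "is_word A w"
    and "\<And>n. \<exists>q. safe_path A p (prefix n w) q"
  shows "w \<in> safe_lang A p"
proof -
  define r where "r n = (THE q. safe_path A p (prefix n w) q)" for n
  have r: "safe_path A p (prefix n w) (r n)" for n
    unfolding r_def using assms(5)[of n] safe_path_unique[OF assms(1-3)] by (metis theI)
  have "safe_run A p w r"
    unfolding safe_run_def
  proof (intro conjI allI)
    show "r 0 = p" using r[of 0] by simp
    fix i
    obtain m where "safe_path A p (prefix i w) m" "r (Suc i) \<in> delta_nacc A m (w i)"
      using r[of "Suc i"] by (auto simp: safe_path_snoc)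
    then show "r (Suc i) \<in> delta_nacc A (r i) (w i)"
      using safe_path_unique[OF assms(1-3) _ r[of i]] by blast
  qed
  then show ?thesis using assms(4) by (auto simp: safe_lang_def)
qed

lemma safe_lang_nonempty_if_closed:
  assumes "\<And>y. y \<in> Y \<Longrightarrow> \<exists>\<sigma> \<in> alph A. \<exists>t \<in> delta_nacc A y \<sigma>. t \<in> Y" and "s \<in> Y"
  shows "safe_lang A s \<noteq> {}"
proof -
  have "\<forall>y \<in> Y. \<exists>st. fst st \<in> alph A \<and> snd st \<in> delta_nacc A y (fst st) \<and> snd st \<in> Y"
    using assms(1) by fastforce
  then obtain F where F: "\<And>y. y \<in> Y \<Longrightarrow>
      fst (F y) \<in> alph A \<and> snd (F y) \<in> delta_nacc A y (fst (F y)) \<and> snd (F y) \<in> Y"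
    by metis
  define r where "r k = ((snd \<circ> F) ^^ k) s" for k
  have rY: "r k \<in> Y" for k
    by (induction k) (simp_all add: r_def assms(2) F)
  have "safe_run A s (\<lambda>k. fst (F (r k))) r" "is_word A (\<lambda>k. fst (F (r k)))"
    using F rY by (simp_all add: safe_run_def r_def is_word_def)
  then show ?thesis by (auto simp: safe_lang_def)
qed

lemma normal_safe_successor_has_safe_successor:
  assumes "wf_tNCW A" "normal A" "q \<in> states A" "\<sigma> \<in> alph A" "s \<in> delta_nacc A q \<sigma>"
  shows "\<exists>\<tau> \<in> alph A. delta_nacc A s \<tau> \<noteq> {}"
proof -
  have "(q, s) \<in> nacc_step A" using assms(3-5) by (auto simp: nacc_step_def)
  then have "(s, q) \<in> (nacc_step A)\<^sup>*" using assms(2) unfolding normal_def by blast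
  then show ?thesis
  proof (cases rule: converse_rtranclE)
    case base
    then show ?thesis using assms(4,5) by blast
  qed (auto simp: nacc_step_def)
qed

lemma normal_safe_lang_nonempty:
  assumes "wf_tNCW A" "normal A" "q \<in> states A" "\<sigma> \<in> alph A" "s \<in> delta_nacc A q \<sigma>"
  shows "safe_lang A s \<noteq> {}"
proof -
  define Y where "Y = {y \<in> states A. \<exists>\<tau> \<in> alph A. delta_nacc A y \<tau> \<noteq> {}}"
  have closed: "t \<in> Y" if "y \<in> states A" "\<tau> \<in> alph A" "t \<in> delta_nacc A y \<tau>" for y \<tau> t
  proof -
    have "t \<in> states A"
      using that wf_tNCW_delta_nacc_in_states[OF assms(1)] by blast
    then show ?thesis
      using normal_safe_successor_has_safe_successor[OF assms(1,2) that] by (simp add: Y_def)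
  qed
  show ?thesis
  proof (rule safe_lang_nonempty_if_closed)
    show "\<exists>\<tau> \<in> alph A. \<exists>t \<in> delta_nacc A y \<tau>. t \<in> Y" if "y \<in> Y" for y
    proof -
      obtain \<tau> t where "y \<in> states A" "\<tau> \<in> alph A" "t \<in> delta_nacc A y \<tau>"
        using \<open>y \<in> Y\<close> by (auto simp: Y_def)
      then show ?thesis using closed by blast
    qed
    show "s \<in> Y" using closed[OF assms(3-5)] .
  qed
qed

section \<open>Safe dominance between states\<close>

definition safe_le :: "('q, 'a) tNCW \<Rightarrow> 'q \<Rightarrow> ('p, 'a) tNCW \<Rightarrow> 'p \<Rightarrow> bool" where
  "safe_le A a B b \<longleftrightarrow> state_lang A a = state_lang B b \<and> safe_lang A a \<subseteq> safe_lang B b"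

definition strongly_equiv :: "('q, 'a) tNCW \<Rightarrow> 'q \<Rightarrow> ('p, 'a) tNCW \<Rightarrow> 'p \<Rightarrow> bool" where
  "strongly_equiv A a B b \<longleftrightarrow> state_lang A a = state_lang B b \<and> safe_lang A a = safe_lang B b"

lemma strongly_equiv_iff_safe_le: "strongly_equiv A a B b \<longleftrightarrow> safe_le A a B b \<and> safe_le B b A a"
  by (auto simp: strongly_equiv_def safe_le_def)

lemma strongly_equiv_sym: "strongly_equiv A a B b \<Longrightarrow> strongly_equiv B b A a"
  by (simp add: strongly_equiv_def)

lemma strongly_equiv_trans:
  "strongly_equiv A a B b \<Longrightarrow> strongly_equiv B b C c \<Longrightarrow> strongly_equiv A a C c"
  by (simp add: strongly_equiv_def)

lemma safe_le_trans: "safe_le A a B b \<Longrightarrow> safe_le B b C c \<Longrightarrow> safe_le A a C c"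
  by (auto simp: safe_le_def)

lemma safe_successor_safe_lang_subset:
  assumes "wf_tNCW A" "safe_det A" "wf_tNCW B" "safe_det B" "a \<in> states A" "b \<in> states B"
    and "\<sigma> \<in> alph A" "\<sigma> \<in> alph B" "s \<in> delta_nacc A a \<sigma>" "t \<in> delta_nacc B b \<sigma>"
    and "safe_lang A a \<subseteq> safe_lang B b"
  shows "safe_lang A s \<subseteq> safe_lang B t"
proof
  fix w assume "w \<in> safe_lang A s"
  then have "\<sigma> ## w \<in> safe_lang B b"
    using safe_successor_build_mem_safe_lang[OF assms(1,2,5,7,9)] assms(11) by blast
  then show "w \<in> safe_lang B t"
    using safe_successor_build_mem_safe_lang[OF assms(3,4,6,8,10)] by simp
qed

lemma safe_lang_subset_successor:
  assumes "wf_tNCW A" "safe_det A" "wf_tNCW B" "safe_det B" "a \<in> states A" "b \<in> states B"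
    and "\<sigma> \<in> alph A" "\<sigma> \<in> alph B" "s \<in> delta_nacc A a \<sigma>" "safe_lang A s \<noteq> {}"
    and "safe_lang A a \<subseteq> safe_lang B b"
  obtains t where "t \<in> delta_nacc B b \<sigma>" "safe_lang A s \<subseteq> safe_lang B t"
proof -
  obtain w where "w \<in> safe_lang A s" using assms(10) by blast
  then have "\<sigma> ## w \<in> safe_lang B b"
    using safe_successor_build_mem_safe_lang[OF assms(1,2,5,7,9)] assms(11) by blast
  then obtain t where "t \<in> delta_nacc B b \<sigma>"
    by (auto simp: build_mem_safe_lang_iff)
  then show thesis
    using that safe_successor_safe_lang_subset[OF assms(1-9)] assms(11) by blast
qed

locale det_normal_tNCW =
  fixes A :: "('q, 'a) tNCW"
  assumes wf: "wf_tNCW A" and sem_det: "sem_det A" and safe_det: "safe_det A" and normal: "normal A"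

locale det_normal_pair = A: det_normal_tNCW A + B: det_normal_tNCW B
  for A :: "('q, 'a) tNCW" and B :: "('p, 'a) tNCW" +
  assumes same_alph: "alph A = alph B"
begin

lemma safe_le_successor:
  assumes "a \<in> states A" "b \<in> states B" "safe_le A a B b" "\<sigma> \<in> alph A" "s \<in> delta_nacc A a \<sigma>"
  obtains t where "t \<in> delta_nacc B b \<sigma>" "safe_le A s B t" "safe_le B b A a \<Longrightarrow> safe_le B t A s"
proof -
  have \<sigma>: "\<sigma> \<in> alph B" using assms(4) same_alph by simp
  obtain t where t: "t \<in> delta_nacc B b \<sigma>" "safe_lang A s \<subseteq> safe_lang B t"
    using safe_lang_subset_successor[OF A.wf A.safe_det B.wf B.safe_det assms(1,2,4) \<sigma> assms(5)
        normal_safe_lang_nonempty[OF A.wf A.normal assms(1,4,5)]] assms(3)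
    by (auto simp: safe_le_def)
  have "s \<in> trans A a \<sigma>" "t \<in> trans B b \<sigma>"
    using assms(5) t(1) by (simp_all add: delta_nacc_def)
  then have "state_lang A s = state_lang B t"
    using successor_state_lang_eq[OF A.wf A.sem_det B.wf B.sem_det assms(1,2) _ assms(4) \<sigma>] assms(3)
    unfolding safe_le_def by blast
  moreover have "safe_lang B t \<subseteq> safe_lang A s" if "safe_le B b A a"
    using safe_successor_safe_lang_subset[OF B.wf B.safe_det A.wf A.safe_det assms(2,1) \<sigma> assms(4)
        t(1)
        assms(5)] that by (simp add: safe_le_def)
  ultimately show thesis using that t by (simp add: safe_le_def)
qed

lemma safe_le_safe_path:
  "a \<in> states A \<Longrightarrow> b \<in> states B \<Longrightarrow> safe_le A a B b \<Longrightarrow> safe_path A a x a' \<Longrightarrow>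
    \<exists>b'. safe_path B b x b' \<and> safe_le A a' B b' \<and> (safe_le B b A a \<longrightarrow> safe_le B b' A a')"
proof (induction x arbitrary: a b)
  case Nil
  then show ?case by simp
next
  case (Cons \<sigma> x)
  then obtain s where s: "\<sigma> \<in> alph A" "s \<in> delta_nacc A a \<sigma>" "safe_path A s x a'" by auto
  obtain t where t: "t \<in> delta_nacc B b \<sigma>" "safe_le A s B t" "safe_le B b A a \<Longrightarrow> safe_le B t A s"
    using safe_le_successor[OF Cons.prems(1-3) s(1,2)] by blast
  have "s \<in> states A" "t \<in> states B"
    using s(1,2) t(1) Cons.prems(1,2) same_alph wf_tNCW_delta_nacc_in_states[OF A.wf]
      wf_tNCW_delta_nacc_in_states[OF B.wf] by blast+
  then obtain b' where "safe_path B t x b'" "safe_le A a' B b'"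
    "safe_le B t A s \<longrightarrow> safe_le B b' A a'"
    using Cons.IH[OF _ _ t(2) s(3)] by blast
  then show ?case using s(1) t(1,3) same_alph by auto
qed

end

lemma det_normal_pair_swap: "det_normal_pair A B \<Longrightarrow> det_normal_pair B A"
  by (simp add: det_normal_pair_def det_normal_pair_axioms_def)

lemma det_normal_pair_refl: "det_normal_tNCW A \<Longrightarrow> det_normal_pair A A"
  by (simp add: det_normal_pair_def det_normal_pair_axioms_def)

definition strategy :: "('q, 'a) tNCW \<Rightarrow> 'q \<Rightarrow> ('a list \<Rightarrow> 'q) \<Rightarrow> bool" where
  "strategy A q f \<longleftrightarrow>
     f [] = q \<and> (\<forall>u \<in> lists (alph A). \<forall>\<sigma> \<in> alph A. (f u, \<sigma>, f (u @ [\<sigma>])) \<in> Delta A)"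

lemma GFG_iff_strategy:
  "GFG A \<longleftrightarrow>
     (\<exists>f. strategy A (init A) f \<and> (\<forall>w \<in> lang A. accepting A w (\<lambda>i. f (prefix i w))))"
  by (simp add: GFG_def strategy_def Defs_prefix_eq_prefix)

lemma GFG_state_iff_strategy:
  "GFG_state A q \<longleftrightarrow>
     (\<exists>f. strategy A q f \<and> (\<forall>w \<in> state_lang A q. accepting A w (\<lambda>i. f (prefix i w))))"
  by (simp add: GFG_state_def GFG_iff_strategy strategy_def state_lang_def Delta_def from_state_def
      accepting_def)

lemma strategy_step:
  "strategy A q f \<Longrightarrow> u \<in> lists (alph A) \<Longrightarrow> \<sigma> \<in> alph A \<Longrightarrow> f (u @ [\<sigma>]) \<in> trans A (f u) \<sigma>"
  by (simp add: strategy_def Delta_def)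

lemma strategy_path:
  assumes "strategy A q f" "u \<in> lists (alph A)" "v \<in> lists (alph A)"
  shows "path A (f u) v (f (u @ v))"
  using assms(3)
proof (induction v rule: rev_induct)
  case (snoc \<sigma> v)
  then have "f ((u @ v) @ [\<sigma>]) \<in> trans A (f (u @ v)) \<sigma>"
    using strategy_step[OF assms(1), of "u @ v" \<sigma>] assms(2) snoc.prems by simp
  then show ?case using snoc by (auto simp: path_snoc)
qed simp

lemma strategy_in_states:
  "wf_tNCW A \<Longrightarrow> q \<in> states A \<Longrightarrow> strategy A q f \<Longrightarrow> u \<in> lists (alph A) \<Longrightarrow> f u \<in> states A"
  using strategy_path[of A q f "[]" u] path_in_states by (metis append_Nil strategy_def lists.Nil)

lemma strategy_run_from:
  assumes "strategy A q f" "is_word A w"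
  shows "run_from A q w (\<lambda>i. f (prefix i w))"
  using assms is_word_prefix[OF assms(2)] unfolding run_from_def strategy_def
  by (auto simp: Delta_def is_word_def)

definition rename :: "('q \<Rightarrow> 'p) \<Rightarrow> ('q, 'a) tNCW \<Rightarrow> ('p, 'a) tNCW" where
  "rename f A = \<lparr>alph = alph A, states = f ` states A, init = f (init A),
     trans = (\<lambda>p \<sigma>. f ` trans A (inv_into (states A) f p) \<sigma>),
     acc = (\<lambda>(q, \<sigma>, s). (f q, \<sigma>, f s)) ` acc A\<rparr>"

lemma rename_simps [simp]:
  "alph (rename f A) = alph A" "states (rename f A) = f ` states A" "init (rename f A) = f (init A)"
  by (simp_all add: rename_def)

lemma is_word_rename [simp]: "is_word (rename f A) w \<longleftrightarrow> is_word A w"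
  by (simp add: is_word_def)

context
  fixes f :: "'q \<Rightarrow> 'p" and A :: "('q, 'a) tNCW"
  assumes wf: "wf_tNCW A" and inj: "inj_on f (states A)"
begin

lemma trans_rename: "q \<in> states A \<Longrightarrow> trans (rename f A) (f q) \<sigma> = f ` trans A q \<sigma>"
  using inj by (simp add: rename_def)

lemma wf_rename: "wf_tNCW (rename f A)"
proof -
  have "acc (rename f A) \<subseteq> Delta (rename f A)"
  proof
    fix t assume "t \<in> acc (rename f A)"
    then obtain q \<sigma> s where "t = (f q, \<sigma>, f s)" "(q, \<sigma>, s) \<in> Delta A"
      using wf by (auto simp: rename_def wf_tNCW_def)
    then show "t \<in> Delta (rename f A)"
      by (auto simp: Delta_def trans_rename)
  qed
  moreover have "trans (rename f A) p \<sigma> \<noteq> {} \<and> trans (rename f A) p \<sigma> \<subseteq> states (rename f A)"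
    if p: "p \<in> states (rename f A)" and \<sigma>: "\<sigma> \<in> alph (rename f A)" for p \<sigma>
  proof -
    obtain q where "q \<in> states A" "p = f q" "\<sigma> \<in> alph A"
      using p \<sigma> by auto
    then show ?thesis
      using wf by (auto simp: trans_rename wf_tNCW_def)
  qed
  ultimately show ?thesis
    using wf by (simp add: wf_tNCW_def)
qed

lemma run_from_rename_iff:
  assumes "q \<in> states A" "is_word A w" "\<And>i. r i \<in> states A"
  shows "run_from (rename f A) (f q) w (f \<circ> r) \<longleftrightarrow> run_from A q w r"
proof -
  have "f (r (Suc i)) \<in> f ` trans A (r i) (w i) \<longleftrightarrow> r (Suc i) \<in> trans A (r i) (w i)" for i
  proof -
    have "trans A (r i) (w i) \<subseteq> states A"
      using assms(2,3) wf by (auto simp: is_word_def wf_tNCW_def)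
    then show ?thesis using inj assms(3) by (simp add: inj_on_image_mem_iff)
  qed
  then show ?thesis
    using assms inj by (simp add: run_from_def trans_rename inj_on_eq_iff)
qed

lemma accepting_rename_iff:
  assumes "\<And>i. r i \<in> states A"
  shows "accepting (rename f A) w (f \<circ> r) \<longleftrightarrow> accepting A w r"
proof -
  have "acc A \<subseteq> Delta A"
    using wf by (simp add: wf_tNCW_def)
  then have "acc A \<subseteq> states A \<times> UNIV \<times> states A"
    using wf_tNCW_trans_in_states[OF wf] by (force simp: Delta_def)
  then have "(f (r i), w i, f (r (Suc i))) \<in> acc (rename f A) \<longleftrightarrow> (r i, w i, r (Suc i)) \<in> acc A" for i
    using assms inj
    by (auto simp: rename_def inj_on_eq_iff intro!: image_eqI[where x = "(r i, w i, r (Suc i))"])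
  then show ?thesis by (simp add: accepting_def)
qed

lemma state_lang_rename:
  assumes "q \<in> states A"
  shows "state_lang (rename f A) (f q) = state_lang A q"
proof (rule set_eqI iffI)+
  fix w assume "w \<in> state_lang A q"
  then obtain r where r: "is_word A w" "run_from A q w r" "accepting A w r"
    by (auto simp: mem_state_lang_iff)
  moreover have "r i \<in> states A" for i
    using run_from_in_states[OF wf assms r(1,2)] .
  ultimately show "w \<in> state_lang (rename f A) (f q)"
    using assms by (auto simp: mem_state_lang_iff run_from_rename_iff accepting_rename_iff
        intro!: exI[of _ "f \<circ> r"])
next
  fix w assume "w \<in> state_lang (rename f A) (f q)"
  then obtain r' where r': "is_word A w" "run_from (rename f A) (f q) w r'"
    "accepting (rename f A) w r'"
    by (auto simp: mem_state_lang_iff)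
  have "r' i \<in> f ` states A" for i
    using run_from_in_states[OF wf_rename _ _ r'(2)] assms r'(1) by simp
  moreover define r where "r = inv_into (states A) f \<circ> r'"
  ultimately have "r' = f \<circ> r" "\<And>i. r i \<in> states A"
    by (auto simp: f_inv_into_f inv_into_into)
  then have "run_from A q w r" "accepting A w r"
    using r' run_from_rename_iff[OF assms r'(1)] accepting_rename_iff by auto
  then show "w \<in> state_lang A q"
    using r'(1) by (auto simp: mem_state_lang_iff)
qed

lemma lang_rename: "lang (rename f A) = lang A"
  using state_lang_rename[of "init A"] wf
  by (simp add: lang_eq_state_lang_init wf_tNCW_def rename_def)

lemma GFG_rename:
  assumes "GFG A"
  shows "GFG (rename f A)"
proof -
  obtain g where g: "strategy A (init A) g" "\<forall>w \<in> lang A. accepting A w (\<lambda>i. g (prefix i w))"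
    using assms by (auto simp: GFG_iff_strategy)
  have init: "init A \<in> states A" using wf by (simp add: wf_tNCW_def)
  have "strategy (rename f A) (init (rename f A)) (f \<circ> g)"
    using g(1) strategy_in_states[OF wf init g(1)] trans_rename
    by (auto simp: strategy_def Delta_def rename_def[of f A])
  moreover have "accepting (rename f A) w (\<lambda>i. (f \<circ> g) (prefix i w))" if "w \<in> lang A" for w
    using accepting_rename_iff[of "\<lambda>i. g (prefix i w)"] g(2) that
      strategy_in_states[OF wf init g(1) is_word_prefix]
    by (auto simp: lang_def comp_def)
  ultimately show ?thesis
    unfolding GFG_iff_strategy lang_rename by blast
qed

end

lemma exists_nat_copy:
  fixes A :: "('q, 'a) tNCW"
  assumes "wf_tNCW A" "GFG A"
  obtains B :: "(nat, 'a) tNCW"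
  where "wf_tNCW B" "alph B = alph A" "GFG B" "lang B = lang A" "card (states B) = card (states A)"
proof -
  obtain f :: "'q \<Rightarrow> nat" where "inj_on f (states A)"
    using finite_imp_inj_to_nat_seg assms(1) by (metis wf_tNCW_def)
  then have "wf_tNCW (rename f A)" "GFG (rename f A)" "lang (rename f A) = lang A"
    "card (states (rename f A)) = card (states A)"
    using assms wf_rename lang_rename GFG_rename card_image by simp_all
  then show thesis using that by simp
qed

lemma minimal_GFG_card_le:
  assumes "minimal_GFG A" "wf_tNCW D" "GFG D" "alph D = alph A" "lang D = lang A"
  shows "card (states A) \<le> card (states D)"
  using exists_nat_copy[OF assms(2,3)] assms(1,4,5) unfolding minimal_GFG_def
  by (metis not_le)

section \<open>Redirecting states into a subset\<close>

definition redirect :: "('q, 'a) tNCW \<Rightarrow> 'q set \<Rightarrow> ('q \<Rightarrow> 'q) \<Rightarrow> ('q, 'a) tNCW" where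
  "redirect A Q \<rho> = \<lparr>alph = alph A, states = Q, init = \<rho> (init A),
     trans = (\<lambda>d \<sigma>. if delta_nacc A d \<sigma> \<noteq> {} then \<rho> ` delta_nacc A d \<sigma>
       else {d' \<in> Q. \<exists>s \<in> trans A d \<sigma>. state_lang A d' = state_lang A s}),
     acc = {(d, \<sigma>, d'). d \<in> Q \<and> \<sigma> \<in> alph A \<and> delta_nacc A d \<sigma> = {} \<and> d' \<in> Q \<and>
       (\<exists>s \<in> trans A d \<sigma>. state_lang A d' = state_lang A s)}\<rparr>"

lemma redirect_simps [simp]:
  "alph (redirect A Q \<rho>) = alph A" "states (redirect A Q \<rho>) = Q"
  "init (redirect A Q \<rho>) = \<rho> (init A)"
  by (simp_all add: redirect_def)

lemma is_word_redirect [simp]: "is_word (redirect A Q \<rho>) w \<longleftrightarrow> is_word A w"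
  by (simp add: is_word_def)

locale redirection = det_normal_tNCW A for A :: "('q, 'a) tNCW" +
  fixes Q :: "'q set" and \<rho> :: "'q \<Rightarrow> 'q"
  assumes GFG: "GFG A"
    and subset: "Q \<subseteq> states A"
    and redirect_into: "\<And>q. q \<in> states A \<Longrightarrow> \<rho> q \<in> Q \<and> safe_le A q A (\<rho> q)"
    and redirect_safe_successor: "\<And>d \<sigma> s. d \<in> Q \<Longrightarrow> \<sigma> \<in> alph A \<Longrightarrow> s \<in> delta_nacc A d \<sigma> \<Longrightarrow>
      safe_lang A (\<rho> s) \<subseteq> safe_lang A s"
begin

abbreviation D :: "('q, 'a) tNCW" where
  "D \<equiv> redirect A Q \<rho>"

lemma state_lang_redirect_into: "q \<in> states A \<Longrightarrow> state_lang A (\<rho> q) = state_lang A q"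
  using redirect_into by (simp add: safe_le_def)

lemma delta_nacc_redirect: "d \<in> Q \<Longrightarrow> \<sigma> \<in> alph A \<Longrightarrow> delta_nacc D d \<sigma> = \<rho> ` delta_nacc A d \<sigma>"
  by (auto simp: delta_nacc_def redirect_def)

lemma acc_redirect_iff:
  "d \<in> Q \<Longrightarrow> \<sigma> \<in> alph A \<Longrightarrow> d' \<in> trans D d \<sigma> \<Longrightarrow> (d, \<sigma>, d') \<in> acc D \<longleftrightarrow> delta_nacc A d \<sigma> = {}"
  by (auto simp: redirect_def split: if_splits)

lemma trans_redirect_state_lang:
  assumes "d \<in> Q" "\<sigma> \<in> alph A" "d' \<in> trans D d \<sigma>"
  shows "d' \<in> Q \<and> (\<exists>s \<in> trans A d \<sigma>. state_lang A d' = state_lang A s)"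
proof (cases "delta_nacc A d \<sigma> = {}")
  case True
  then show ?thesis using assms(3) by (simp add: redirect_def)
next
  case False
  then obtain s where "s \<in> delta_nacc A d \<sigma>" "d' = \<rho> s"
    using assms(3) by (auto simp: redirect_def)
  moreover from this have "s \<in> states A"
    using wf_tNCW_delta_nacc_in_states[OF wf] assms(1,2) subset by blast
  ultimately show ?thesis
    using redirect_into state_lang_redirect_into by (auto simp: delta_nacc_def)
qed

lemma wf_redirect: "wf_tNCW D"
proof -
  have "trans D d \<sigma> \<noteq> {}" if d: "d \<in> Q" and \<sigma>: "\<sigma> \<in> alph A" for d \<sigma>
  proof -
    obtain s where "s \<in> trans A d \<sigma>"
      using wf_tNCW_trans_nonempty[OF wf] d \<sigma> subset by blast
    moreover from this have "s \<in> states A"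
      using wf_tNCW_trans_in_states[OF wf] d \<sigma> subset by blast
    ultimately have "\<rho> s \<in> Q \<and> (\<exists>s' \<in> trans A d \<sigma>. state_lang A (\<rho> s) = state_lang A s')"
      using redirect_into state_lang_redirect_into by blast
    then show ?thesis by (auto simp: redirect_def)
  qed
  moreover have "acc D \<subseteq> Delta D"
    by (auto simp: redirect_def Delta_def)
  moreover have "\<rho> (init A) \<in> Q"
    using wf redirect_into by (simp add: wf_tNCW_def)
  ultimately show ?thesis
    using wf subset trans_redirect_state_lang finite_subset
    by (auto simp: wf_tNCW_def)
qed

lemma redirect_path_state_lang:
  "d \<in> Q \<Longrightarrow> a \<in> states A \<Longrightarrow> state_lang A d = state_lang A a \<Longrightarrow> path D d x d' \<Longrightarrow>
    path A a x a' \<Longrightarrow> state_lang A d' = state_lang A a'"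
proof (induction x arbitrary: d a)
  case (Cons \<sigma> x)
  then obtain e b where e: "\<sigma> \<in> alph A" "e \<in> trans D d \<sigma>" "path D e x d'"
    and b: "b \<in> trans A a \<sigma>" "path A b x a'"
    by auto
  obtain s where s: "e \<in> Q" "s \<in> trans A d \<sigma>" "state_lang A e = state_lang A s"
    using trans_redirect_state_lang[OF Cons.prems(1) e(1,2)] by blast
  have "state_lang A s = state_lang A b"
    using successor_state_lang_eq[OF wf sem_det wf sem_det _ Cons.prems(2,3) e(1) e(1) s(2) b(1)]
      Cons.prems(1) subset by blast
  moreover have "b \<in> states A"
    using wf_tNCW_trans_in_states[OF wf Cons.prems(2) e(1) b(1)] .
  ultimately show ?case
    using Cons.IH[OF s(1) _ _ e(3) b(2)] s(3) by simp
qed simp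

lemma safe_lang_redirect_subset:
  assumes "d \<in> Q"
  shows "safe_lang D d \<subseteq> safe_lang A d"
proof
  fix w assume "w \<in> safe_lang D d"
  then obtain e where w: "is_word A w" and e: "safe_run D d w e"
    by (auto simp: safe_lang_def)
  have eQ: "e n \<in> Q" for n
    using safe_run_in_states[OF wf_redirect _ _ e] assms w by simp
  have "\<exists>a. safe_path A d (prefix n w) a \<and> safe_lang A (e n) \<subseteq> safe_lang A a" for n
  proof (induction n)
    case 0
    show ?case using e by (auto simp: safe_run_def)
  next
    case (Suc n)
    then obtain a where a: "safe_path A d (prefix n w) a" "safe_lang A (e n) \<subseteq> safe_lang A a"
      by blast
    have wn: "w n \<in> alph A" using w by (simp add: is_word_def)
    have "e (Suc n) \<in> delta_nacc D (e n) (w n)"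
      using e by (simp add: safe_run_def)
    then have "e (Suc n) \<in> \<rho> ` delta_nacc A (e n) (w n)"
      using delta_nacc_redirect[OF eQ[of n] wn] by simp
    then obtain s where s: "s \<in> delta_nacc A (e n) (w n)" "e (Suc n) = \<rho> s" by blast
    have "e n \<in> states A" "a \<in> states A"
      using eQ subset safe_path_in_states[OF wf _ a(1)] assms by auto
    then obtain t where t: "t \<in> delta_nacc A a (w n)" "safe_lang A s \<subseteq> safe_lang A t"
      using safe_lang_subset_successor[OF wf safe_det wf safe_det _ _ wn wn s(1)
          normal_safe_lang_nonempty[OF wf normal _ wn s(1)] a(2)] by blast
    moreover have "safe_lang A (e (Suc n)) \<subseteq> safe_lang A s"
      using redirect_safe_successor[OF eQ[of n] wn s(1)] s(2) by simp
    ultimately have "safe_path A d (prefix (Suc n) w) t \<and> safe_lang A (e (Suc n)) \<subseteq> safe_lang A t"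
      using a(1) wn by (auto simp: safe_path_snoc)
    then show ?case ..
  qed
  then show "w \<in> safe_lang A d"
    using safe_langI_prefixes[OF wf safe_det _ w] assms subset by blast
qed

lemma lang_redirect_subset: "lang D \<subseteq> lang A"
proof
  fix w assume "w \<in> lang D"
  then obtain e where w: "is_word A w" and e: "run_from D (\<rho> (init A)) w e" "accepting D w e"
    by (auto simp: lang_eq_state_lang_init mem_state_lang_iff)
  obtain m where "suffix m w \<in> safe_lang D (e m)"
    using eventually_safe_suffix[OF e] w by (metis is_word_redirect order_refl)
  have init: "init A \<in> states A" "\<rho> (init A) \<in> Q"
    using wf redirect_into by (auto simp: wf_tNCW_def)
  have "e m \<in> Q"
    using run_from_in_states[OF wf_redirect _ _ e(1)] init w by simp
  then have "suffix m w \<in> state_lang A (e m)"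
    using \<open>suffix m w \<in> safe_lang D (e m)\<close> safe_lang_redirect_subset[of "e m"]
      safe_lang_subset_state_lang[of A "e m"] by blast
  obtain q where q: "path A (init A) (prefix m w) q"
    using path_exists[OF wf init(1) is_word_prefix[OF w]] by blast
  have "state_lang A (e m) = state_lang A q"
    using redirect_path_state_lang[OF init(2,1) state_lang_redirect_into[OF init(1)]
        run_from_path[OF e(1), of m] q] w by simp
  then have "prefix m w \<frown> suffix m w \<in> state_lang A (init A)"
    using path_conc_mem_state_lang[OF wf sem_det init(1) q, of "suffix m w"]
      \<open>suffix m w \<in> state_lang A (e m)\<close> by blast
  then show "w \<in> lang A"
    by (simp add: lang_eq_state_lang_init flip: prefix_suffix)
qed

(* Recursion on the reversed word, that is, on its last letter. *)

primrec redirect_strategy_rev :: "('a list \<Rightarrow> 'q) \<Rightarrow> 'a list \<Rightarrow> 'q" where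
  "redirect_strategy_rev g [] = \<rho> (init A)"
| "redirect_strategy_rev g (\<sigma> # v) =
     \<rho> (if delta_nacc A (redirect_strategy_rev g v) \<sigma> \<noteq> {}
        then SOME s. s \<in> delta_nacc A (redirect_strategy_rev g v) \<sigma> else g (rev (\<sigma> # v)))"

definition redirect_strategy :: "('a list \<Rightarrow> 'q) \<Rightarrow> 'a list \<Rightarrow> 'q" where
  "redirect_strategy g u = redirect_strategy_rev g (rev u)"

lemma redirect_strategy_Nil: "redirect_strategy g [] = \<rho> (init A)"
  by (simp add: redirect_strategy_def)

lemma redirect_strategy_snoc:
  "redirect_strategy g (u @ [\<sigma>]) =
     \<rho> (if delta_nacc A (redirect_strategy g u) \<sigma> \<noteq> {}
        then SOME s. s \<in> delta_nacc A (redirect_strategy g u) \<sigma> else g (u @ [\<sigma>]))"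
  by (simp add: redirect_strategy_def)

context
  fixes g :: "'a list \<Rightarrow> 'q"
  assumes g: "strategy A (init A) g"
    and g_accepting: "\<And>w. w \<in> lang A \<Longrightarrow> accepting A w (\<lambda>i. g (prefix i w))"
begin

lemma redirect_strategy_invariant:
  "u \<in> lists (alph A) \<Longrightarrow>
    redirect_strategy g u \<in> Q \<and> state_lang A (redirect_strategy g u) = state_lang A (g u)"
proof (induction u rule: rev_induct)
  case Nil
  show ?case
    using redirect_into state_lang_redirect_into wf_tNCW_init_in_states[OF wf] g
    by (simp add: redirect_strategy_Nil strategy_def)
next
  case (snoc \<sigma> u)
  let ?d = "redirect_strategy g u"
  have u: "u \<in> lists (alph A)" "\<sigma> \<in> alph A" using snoc.prems by auto
  then have d: "?d \<in> Q" "state_lang A ?d = state_lang A (g u)" using snoc.IH by auto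
  have gu: "g u \<in> states A" "g (u @ [\<sigma>]) \<in> trans A (g u) \<sigma>"
    using strategy_in_states[OF wf wf_tNCW_init_in_states[OF wf] g u(1)] strategy_step[OF g u] .
  define s where
    "s = (if delta_nacc A ?d \<sigma> \<noteq> {} then SOME s. s \<in> delta_nacc A ?d \<sigma> else g (u @ [\<sigma>]))"
  have "s \<in> states A \<and> state_lang A s = state_lang A (g (u @ [\<sigma>]))"
  proof (cases "delta_nacc A ?d \<sigma> = {}")
    case True
    then show ?thesis using wf_tNCW_trans_in_states[OF wf gu(1) u(2) gu(2)] by (simp add: s_def)
  next
    case False
    then have "s \<in> delta_nacc A ?d \<sigma>" by (simp add: s_def some_in_eq)
    then have "s \<in> trans A ?d \<sigma>" "s \<in> states A"
      using wf_tNCW_delta_nacc_in_states[OF wf, of ?d \<sigma>] d(1) subset u(2)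
      by (auto simp: delta_nacc_def)
    then show ?thesis
      using successor_state_lang_eq[OF wf sem_det wf sem_det _ gu(1) d(2) u(2) u(2) _ gu(2)]
        d(1) subset
      by blast
  qed
  then show ?case
    using redirect_into[of s] state_lang_redirect_into[of s]
    by (simp add: redirect_strategy_snoc s_def)
qed

lemma redirect_strategy_trans:
  assumes "u \<in> lists (alph A)" "\<sigma> \<in> alph A"
  shows "redirect_strategy g (u @ [\<sigma>]) \<in> trans D (redirect_strategy g u) \<sigma>"
proof (cases "delta_nacc A (redirect_strategy g u) \<sigma> = {}")
  case True
  let ?d = "redirect_strategy g u"
  have d: "?d \<in> Q" "state_lang A ?d = state_lang A (g u)"
    using redirect_strategy_invariant[OF assms(1)] by auto
  obtain s where s: "s \<in> trans A ?d \<sigma>"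
    using wf_tNCW_trans_nonempty[OF wf _ assms(2)] d(1) subset by blast
  have "state_lang A s = state_lang A (g (u @ [\<sigma>]))"
    using successor_state_lang_eq[OF wf sem_det wf sem_det _ _ d(2) assms(2) assms(2) s
        strategy_step[OF g assms]] d(1) subset
      strategy_in_states[OF wf wf_tNCW_init_in_states[OF wf] g assms(1)]
    by blast
  moreover have "redirect_strategy g (u @ [\<sigma>]) \<in> Q \<and>
      state_lang A (redirect_strategy g (u @ [\<sigma>])) = state_lang A (g (u @ [\<sigma>]))"
    using redirect_strategy_invariant assms by simp
  ultimately show ?thesis
    using True s by (auto simp: redirect_def)
next
  case False
  then show ?thesis
    by (auto simp: redirect_def redirect_strategy_snoc some_in_eq)
qed

lemma strategy_redirect_strategy: "strategy D (init D) (redirect_strategy g)"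
  using redirect_strategy_invariant redirect_strategy_trans
  by (auto simp: strategy_def Delta_def redirect_strategy_Nil)

lemma redirect_strategy_safe_step:
  assumes w: "is_word A w"
    and safe: "suffix i w \<in> safe_lang A (redirect_strategy g (prefix i w))"
  shows "delta_nacc A (redirect_strategy g (prefix i w)) (w i) \<noteq> {}"
    and "suffix (Suc i) w \<in> safe_lang A (redirect_strategy g (prefix (Suc i) w))"
proof -
  let ?d = "redirect_strategy g (prefix i w)"
  have wi: "w i \<in> alph A" using w by (simp add: is_word_def)
  have d: "?d \<in> states A"
    using redirect_strategy_invariant[OF is_word_prefix[OF w]] subset by blast
  have "w i ## suffix (Suc i) w \<in> safe_lang A ?d"
    using safe by simp
  then obtain s where s: "s \<in> delta_nacc A ?d (w i)" "suffix (Suc i) w \<in> safe_lang A s"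
    unfolding build_mem_safe_lang_iff by blast
  then show "delta_nacc A ?d (w i) \<noteq> {}" by blast
  have "(SOME s. s \<in> delta_nacc A ?d (w i)) \<in> delta_nacc A ?d (w i)"
    using s(1) by (rule someI)
  then have "(SOME s. s \<in> delta_nacc A ?d (w i)) = s"
    by (rule safe_det_successor_unique[OF wf safe_det d wi _ s(1)])
  then have "redirect_strategy g (prefix (Suc i) w) = \<rho> s"
    using s(1) by (auto simp: redirect_strategy_snoc)
  moreover have "safe_lang A s \<subseteq> safe_lang A (\<rho> s)"
    using redirect_into[of s] wf_tNCW_delta_nacc_in_states[OF wf d wi] s(1)
    by (auto simp: safe_le_def)
  ultimately show "suffix (Suc i) w \<in> safe_lang A (redirect_strategy g (prefix (Suc i) w))"
    using s(2) by (metis subsetD)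
qed

text \<open>
  Once the run chosen by A's strategy has become safe, the next \<alpha>-transition of the
  redirected strategy lands in a state whose safe language contains the rest of the word,
  and from then on the redirected run stays safe.
\<close>

lemma redirect_strategy_accepting:
  assumes "w \<in> lang A"
  shows "accepting D w (\<lambda>i. redirect_strategy g (prefix i w))"
proof -
  define d where "d i = redirect_strategy g (prefix i w)" for i
  have w: "is_word A w" using assms by (simp add: lang_def)
  obtain m where m: "\<And>i. m \<le> i \<Longrightarrow> suffix i w \<in> safe_lang A (g (prefix i w))"
    using eventually_safe_suffix[OF strategy_run_from[OF g w] g_accepting[OF assms] w] by blast
  have "\<exists>k. \<forall>i \<ge> k. delta_nacc A (d i) (w i) \<noteq> {}"
  proof (cases "\<exists>i \<ge> m. delta_nacc A (d i) (w i) = {}")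
    case True
    then obtain i where i: "m \<le> i" "delta_nacc A (d i) (w i) = {}" by blast
    have "g (prefix (Suc i) w) \<in> states A"
      using strategy_in_states[OF wf wf_tNCW_init_in_states[OF wf] g is_word_prefix[OF w]] .
    then have start: "suffix (Suc i) w \<in> safe_lang A (d (Suc i))"
      using i m[of "Suc i"] redirect_into by (auto simp: d_def redirect_strategy_snoc safe_le_def)
    have "suffix j w \<in> safe_lang A (d j)" if "Suc i \<le> j" for j
      using that
    proof (induction j rule: dec_induct)
      case base
      then show ?case using start .
    next
      case (step k)
      show ?case
        using step.IH unfolding d_def by (rule redirect_strategy_safe_step(2)[OF w])
    qed
    then show ?thesis using redirect_strategy_safe_step(1)[OF w] by (auto simp: d_def)
  qed auto
  moreover have "d (Suc i) \<in> trans D (d i) (w i)" "d i \<in> Q" for i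
    using redirect_strategy_trans[OF is_word_prefix[OF w]]
      redirect_strategy_invariant[OF is_word_prefix[OF w]] w
    by (simp_all add: d_def is_word_def)
  ultimately have "MOST i. (d i, w i, d (Suc i)) \<notin> acc D"
    using acc_redirect_iff w by (auto simp: MOST_nat_le is_word_def)
  then show ?thesis by (simp add: accepting_iff_MOST d_def)
qed

lemma lang_subset_redirect: "lang A \<subseteq> lang D"
proof
  fix w assume w: "w \<in> lang A"
  then have "is_word A w" by (simp add: lang_def)
  then show "w \<in> lang D"
    using strategy_run_from[OF strategy_redirect_strategy] redirect_strategy_accepting[OF w]
    by (auto simp: lang_eq_state_lang_init mem_state_lang_iff)
qed

end

theorem redirect_equivalent: "wf_tNCW D" "lang D = lang A" "GFG D"
proof -
  obtain g where g: "strategy A (init A) g" "\<And>w. w \<in> lang A \<Longrightarrow> accepting A w (\<lambda>i. g (prefix i w))"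
    using GFG by (auto simp: GFG_iff_strategy)
  show "wf_tNCW D" by (rule wf_redirect)
  show "lang D = lang A"
    using lang_redirect_subset lang_subset_redirect[OF g] by blast
  then show "GFG D"
    unfolding GFG_iff_strategy
    using strategy_redirect_strategy[OF g] redirect_strategy_accepting[OF g] by auto
qed

corollary card_le_card_if_minimal_GFG: "minimal_GFG A \<Longrightarrow> card (states A) \<le> card Q"
  using minimal_GFG_card_le[of A D] redirect_equivalent by simp

end

section \<open>Safe minimality and safe centrality\<close>

definition safe_minimal :: "('q, 'a) tNCW \<Rightarrow> bool" where
  "safe_minimal A \<longleftrightarrow> (\<forall>p \<in> states A. \<forall>p' \<in> states A. strongly_equiv A p A p' \<longrightarrow> p = p')"

definition safe_centralized :: "('q, 'a) tNCW \<Rightarrow> bool" where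
  "safe_centralized A \<longleftrightarrow>
     (\<forall>p \<in> states A. \<forall>p' \<in> states A. safe_le A p A p' \<longrightarrow> (p, p') \<in> (nacc_step A)\<^sup>*)"

context det_normal_tNCW
begin

(* Otherwise p' could be merged into a strongly equivalent p. *)

lemma safe_minimal_if_minimal_GFG:
  assumes "minimal_GFG A"
  shows "safe_minimal A"
  unfolding safe_minimal_def
proof (intro ballI impI, rule ccontr)
  fix p p' assume p: "p \<in> states A" "p' \<in> states A" and eq: "strongly_equiv A p A p'" and "p \<noteq> p'"
  define \<rho> where "\<rho> q = (if q = p' then p else q)" for q
  have "redirection A (states A - {p'}) \<rho>"
  proof
    show "GFG A" using assms by (simp add: minimal_GFG_def)
    show "\<rho> q \<in> states A - {p'} \<and> safe_le A q A (\<rho> q)" if "q \<in> states A" for q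
      using that p \<open>p \<noteq> p'\<close> eq by (auto simp: \<rho>_def safe_le_def strongly_equiv_def)
    show "safe_lang A (\<rho> s) \<subseteq> safe_lang A s" for s
      using eq by (auto simp: \<rho>_def strongly_equiv_def)
  qed auto
  then have "card (states A) \<le> card (states A - {p'})"
    using assms by (rule redirection.card_le_card_if_minimal_GFG)
  moreover have "finite (states A)" using wf by (simp add: wf_tNCW_def)
  ultimately show False using p(2) card_Diff1_less by fastforce
qed

lemma safe_le_escape:
  assumes p: "p \<in> states A" "p' \<in> states A" and le: "safe_le A p A p'"
    and not_reach: "(p, p') \<notin> (nacc_step A)\<^sup>*" and q: "(p, q) \<in> (nacc_step A)\<^sup>*"
  obtains q' where "q' \<in> states A" "(p, q') \<notin> (nacc_step A)\<^sup>*" "safe_le A q A q'"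
proof -
  obtain x where x: "safe_path A p x q"
    using q rtrancl_nacc_step_iff_safe_path[OF wf p(1)] by blast
  obtain q' where q': "safe_path A p' x q'" "safe_le A q A q'"
    using det_normal_pair.safe_le_safe_path[OF det_normal_pair_refl[OF det_normal_tNCW_axioms]
        p le x] by blast
  have "(q', p') \<in> (nacc_step A)\<^sup>*"
    using q'(1) rtrancl_nacc_step_iff_safe_path[OF wf p(2)] normal by (auto simp: normal_def)
  then have "(p, q') \<notin> (nacc_step A)\<^sup>*" using not_reach by (auto intro: rtrancl_trans)
  then show thesis using that safe_path_in_states[OF wf p(2) q'(1)] q'(2) by blast
qed

(* Otherwise the safe descendants S of p could be redirected into states outside S. *)

lemma safe_centralized_if_minimal_GFG:
  assumes "minimal_GFG A"
  shows "safe_centralized A"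
  unfolding safe_centralized_def
proof (intro ballI impI, rule ccontr)
  fix p p' assume p: "p \<in> states A" "p' \<in> states A" and le: "safe_le A p A p'"
    and not_reach: "(p, p') \<notin> (nacc_step A)\<^sup>*"
  define S where "S = {q. (p, q) \<in> (nacc_step A)\<^sup>*}"
  have "p \<in> S" by (simp add: S_def)
  have escape: "\<exists>q'. q' \<in> states A - S \<and> safe_le A q A q'" if "q \<in> S" for q
    using safe_le_escape[OF p le not_reach] that by (simp add: S_def) blast
  define \<rho> where "\<rho> q = (if q \<in> S then SOME q'. q' \<in> states A - S \<and> safe_le A q A q' else q)" for q
  have "redirection A (states A - S) \<rho>"
  proof
    show "GFG A" using assms by (simp add: minimal_GFG_def)
    show "\<rho> q \<in> states A - S \<and> safe_le A q A (\<rho> q)" if "q \<in> states A" for q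
      using someI_ex[OF escape] that by (auto simp: \<rho>_def safe_le_def)
    show "safe_lang A (\<rho> s) \<subseteq> safe_lang A s"
      if "d \<in> states A - S" "\<sigma> \<in> alph A" "s \<in> delta_nacc A d \<sigma>" for d \<sigma> s
    proof -
      have "(d, s) \<in> nacc_step A" using that by (auto simp: nacc_step_def)
      then have "(s, d) \<in> (nacc_step A)\<^sup>*" using normal by (auto simp: normal_def)
      then have "s \<notin> S" using that(1) by (auto simp: S_def intro: rtrancl_trans)
      then show ?thesis by (simp add: \<rho>_def)
    qed
  qed auto
  then have "card (states A) \<le> card (states A - S)"
    using assms by (rule redirection.card_le_card_if_minimal_GFG)
  moreover have "finite (states A)" using wf by (simp add: wf_tNCW_def)
  moreover have "states A - S \<subset> states A"
    using p(1) \<open>p \<in> S\<close> by blast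
  ultimately show False using psubset_card_mono[of "states A" "states A - S"] by linarith
qed

end

section \<open>Dominated safe descendants in GFG automata\<close>

lemma limit_word_of_chain:
  fixes U :: "nat \<Rightarrow> 'a list"
  assumes "\<And>n. \<exists>v. v \<noteq> [] \<and> U (Suc n) = U n @ v"
  obtains w where "\<And>n i. i < length (U n) \<Longrightarrow> w i = U n ! i"
    and "\<And>n i. i \<le> length (U n) \<Longrightarrow> prefix i w = take i (U n)"
    and "\<And>n. n \<le> length (U n)"
proof -
  have len: "n \<le> length (U n)" for n
  proof (induction n)
    case (Suc n)
    obtain v where "v \<noteq> []" "U (Suc n) = U n @ v" using assms[of n] by blast
    moreover from this(1) have "0 < length v" by simp
    ultimately show ?case using Suc by (simp del: length_greater_0_conv)
  qed simp
  have mono: "\<exists>v. U (m + d) = U m @ v" for m d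
  proof (induction d)
    case (Suc d)
    then show ?case using assms[of "m + d"] by (metis add_Suc_right append.assoc)
  qed simp
  define w where "w k = U (Suc k) ! k" for k
  have w: "w k = U n ! k" if "k < length (U n)" for n k
  proof (cases "Suc k \<le> n")
    case True
    then obtain v where "U n = U (Suc k) @ v" using mono[of "Suc k" "n - Suc k"] by auto
    then show ?thesis using len[of "Suc k"] by (simp add: w_def nth_append)
  next
    case False
    then obtain v where "U (Suc k) = U n @ v" using mono[of n "Suc k - n"] by auto
    then show ?thesis using that by (simp add: w_def nth_append)
  qed
  moreover have "prefix i w = take i (U n)" if "i \<le> length (U n)" for n i
    using that by (intro nth_equalityI) (simp_all add: w)
  ultimately show thesis using that len by blast
qed

lemma safe_lang_limit_word:
  assumes "wf_tNCW A" "safe_det A" "p \<in> states A"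
    and safe: "\<And>n. \<exists>a. safe_path A p (U n) a"
    and w_nth: "\<And>n i. i < length (U n) \<Longrightarrow> w i = U n ! i"
    and w_prefix: "\<And>n i. i \<le> length (U n) \<Longrightarrow> prefix i w = take i (U n)"
    and len: "\<And>n. n \<le> length (U n)"
  shows "w \<in> safe_lang A p"
proof (rule safe_langI_prefixes[OF assms(1-3)])
  show "is_word A w"
    unfolding is_word_def
  proof
    fix k
    have "k < length (U (Suc k))" using len[of "Suc k"] by simp
    moreover have "U (Suc k) \<in> lists (alph A)"
      using safe[of "Suc k"] by (metis path_lists safe_path_imp_path)
    ultimately show "w k \<in> alph A" using w_nth by (metis in_listsD nth_mem)
  qed
  fix n
  obtain a where "safe_path A p (U n) a" using safe[of n] by blast
  then obtain m where "safe_path A p (take n (U n)) m"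
    using safe_path_append[of A p "take n (U n)" "drop n (U n)"] by auto
  then show "\<exists>q. safe_path A p (prefix n w) q"
    by (intro exI[of _ m]) (simp add: w_prefix[OF len])
qed

lemma strategy_alpha_if_not_safe:
  assumes "strategy B q g" "u \<in> lists (alph B)" "is_word B z" "z \<notin> safe_lang B (g u)"
  obtains k where "(g (u @ prefix k z), z k, g (u @ prefix (Suc k) z)) \<in> acc B"
proof -
  have "g ((u @ prefix k z) @ [z k]) \<in> trans B (g (u @ prefix k z)) (z k)" for k
    using strategy_step[OF assms(1), of "u @ prefix k z" "z k"] assms(2,3)
      is_word_prefix[OF assms(3)]
    by (simp add: is_word_def)
  then have step: "g (u @ prefix (Suc k) z) \<in> trans B (g (u @ prefix k z)) (z k)" for k
    by simp
  then have "\<not> safe_run B (g u) z (\<lambda>k. g (u @ prefix k z))"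
    using assms(3,4) by (auto simp: safe_lang_def)
  then show thesis
    using that step by (auto simp: safe_run_def delta_nacc_def)
qed

lemma safe_limit_word_not_accepted:
  assumes "wf_tNCW A" "safe_det A" "p \<in> states A"
    and chain: "\<And>n. \<exists>v j. U (Suc n) = U n @ v \<and> j < length v \<and>
        (g (U n @ take j v), v ! j, g (U n @ take (Suc j) v)) \<in> acc B"
    and safe: "\<And>n. \<exists>a. safe_path A p (U n) a"
  obtains w where "w \<in> safe_lang A p" "\<not> accepting B w (\<lambda>i. g (prefix i w))"
proof -
  have "\<exists>v. v \<noteq> [] \<and> U (Suc n) = U n @ v" for n
    using chain[of n] by fastforce
  then obtain w where w_nth: "\<And>n i. i < length (U n) \<Longrightarrow> w i = U n ! i"
    and w_prefix: "\<And>n i. i \<le> length (U n) \<Longrightarrow> prefix i w = take i (U n)"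
    and len: "\<And>n. n \<le> length (U n)"
    using limit_word_of_chain by blast
  have "\<exists>i \<ge> n. (g (prefix i w), w i, g (prefix (Suc i) w)) \<in> acc B" for n
  proof -
    obtain v j where v: "U (Suc n) = U n @ v" "j < length v"
      "(g (U n @ take j v), v ! j, g (U n @ take (Suc j) v)) \<in> acc B"
      using chain[of n] by blast
    let ?i = "length (U n) + j"
    have "prefix ?i w = U n @ take j v" "prefix (Suc ?i) w = U n @ take (Suc j) v" "w ?i = v ! j"
      using w_prefix[of _ "Suc n"] w_nth[of _ "Suc n"] v(1,2)
      by (simp_all add: nth_append take_Suc_conv_app_nth)
    then show ?thesis using v(3) len[of n] by (intro exI[of _ ?i]) auto
  qed
  then have "\<not> accepting B w (\<lambda>i. g (prefix i w))"
    by (auto simp: accepting_iff_MOST MOST_nat_le)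
  then show thesis
    using that safe_lang_limit_word[OF assms(1-3) safe w_nth w_prefix len] by blast
qed

context det_normal_pair
begin

lemma safe_path_extension_with_alpha:
  assumes g: "strategy B q g" and q: "q \<in> states B" and p: "p \<in> states A"
    and undominated: "\<And>p' q'. (p, p') \<in> (nacc_step A)\<^sup>* \<Longrightarrow> p' \<in> states A \<Longrightarrow> q' \<in> states B \<Longrightarrow>
      \<not> safe_le A p' B q'"
    and u: "safe_path A p u a" and eq: "state_lang A a = state_lang B (g u)"
  obtains v a' j where "safe_path A p (u @ v) a'" "state_lang A a' = state_lang B (g (u @ v))"
    "j < length v" "(g (u @ take j v), v ! j, g (u @ take (Suc j) v)) \<in> acc B"
proof -
  have uB: "u \<in> lists (alph B)"
    using path_lists[OF safe_path_imp_path[OF u]] same_alph by simp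
  have a: "a \<in> states A" using safe_path_in_states[OF A.wf p u] .
  have "(p, a) \<in> (nacc_step A)\<^sup>*"
    using u rtrancl_nacc_step_iff_safe_path[OF A.wf p] by blast
  then have not_le: "\<not> safe_lang A a \<subseteq> safe_lang B (g u)"
    using undominated a strategy_in_states[OF B.wf q g uB] eq by (auto simp: safe_le_def)
  obtain z r where z: "is_word A z" "safe_run A a z r" "z \<notin> safe_lang B (g u)"
    using not_le by (auto simp: safe_lang_def)
  then have zB: "is_word B z" using same_alph by (simp add: is_word_def)
  obtain k where k: "(g (u @ prefix k z), z k, g (u @ prefix (Suc k) z)) \<in> acc B"
    using strategy_alpha_if_not_safe[OF g uB zB z(3)] .
  define v where "v = prefix (Suc k) z"
  have "safe_path A a v (r (Suc k))"
    unfolding v_def by (rule safe_run_safe_path[OF z(2,1)])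
  then have "safe_path A p (u @ v) (r (Suc k))"
    using u by (auto simp: safe_path_append)
  moreover have "state_lang A (r (Suc k)) = state_lang B (g (u @ v))"
    using path_state_lang_eq[OF A.wf A.sem_det B.wf B.sem_det a
        strategy_in_states[OF B.wf q g uB] eq safe_path_imp_path[OF \<open>safe_path A a v _\<close>]
        strategy_path[OF g uB is_word_prefix[OF zB], of "Suc k", folded v_def]] .
  moreover have "take k v = prefix k z" "v ! k = z k" "take (Suc k) v = v" "k < length v"
    by (simp_all add: v_def nth_append)
  ultimately show thesis using that[of v "r (Suc k)" k] k[folded v_def] by simp
qed

text \<open>
  Otherwise B's strategy could be forced to take an \<alpha>-transition again and again along a
  word that A reads safely from p.
\<close>

lemma exists_safe_le_descendant:
  assumes p: "p \<in> states A" and q: "q \<in> states B"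
    and eq: "state_lang A p = state_lang B q" and GFG_q: "GFG_state B q"
  shows "\<exists>p' q'. (p, p') \<in> (nacc_step A)\<^sup>* \<and> p' \<in> states A \<and> q' \<in> states B \<and>
    safe_le A p' B q'"
proof (rule ccontr)
  assume "\<not> ?thesis"
  then have undominated: "\<And>p' q'. (p, p') \<in> (nacc_step A)\<^sup>* \<Longrightarrow> p' \<in> states A \<Longrightarrow>
      q' \<in> states B \<Longrightarrow> \<not> safe_le A p' B q'"
    by blast
  obtain g where g: "strategy B q g"
    and g_accepting: "\<And>w. w \<in> state_lang B q \<Longrightarrow> accepting B w (\<lambda>i. g (prefix i w))"
    using GFG_q by (auto simp: GFG_state_iff_strategy)
  define Inv where "Inv u \<longleftrightarrow> (\<exists>a. safe_path A p u a \<and> state_lang A a = state_lang B (g u))" for u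
  define Ext where "Ext u u' \<longleftrightarrow> (\<exists>v j. u' = u @ v \<and> j < length v \<and>
      (g (u @ take j v), v ! j, g (u @ take (Suc j) v)) \<in> acc B)" for u u'
  have "Inv []"
    using eq g by (simp add: Inv_def strategy_def)
  moreover have "\<exists>u'. Inv u' \<and> Ext u u'" if "Inv u" for u
  proof -
    obtain a where "safe_path A p u a" "state_lang A a = state_lang B (g u)"
      using \<open>Inv u\<close> by (auto simp: Inv_def)
    then obtain v a' j where "safe_path A p (u @ v) a'" "state_lang A a' = state_lang B (g (u @ v))"
      "j < length v" "(g (u @ take j v), v ! j, g (u @ take (Suc j) v)) \<in> acc B"
      using safe_path_extension_with_alpha[OF g q p undominated] by blast
    then show ?thesis unfolding Inv_def Ext_def by blast
  qed
  ultimately have "\<exists>U. \<forall>n. Inv (U n) \<and> Ext (U n) (U (Suc n))"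
    by (intro dependent_nat_choice) blast+
  then obtain U where U: "\<And>n. Inv (U n)" "\<And>n. Ext (U n) (U (Suc n))" by blast
  have "\<exists>a. safe_path A p (U n) a" for n
    using U(1) by (auto simp: Inv_def)
  then obtain w where w: "w \<in> safe_lang A p" "\<not> accepting B w (\<lambda>i. g (prefix i w))"
    using safe_limit_word_not_accepted[where U = U and g = g, OF A.wf A.safe_det p
        U(2)[unfolded Ext_def]] by blast
  have "w \<in> state_lang B q"
    using subsetD[OF safe_lang_subset_state_lang w(1)] eq by simp
  then show False
    using g_accepting w(2) by simp
qed

end

section \<open>Strongly equivalent partners and the isomorphism\<close>

context det_normal_pair
begin

lemma safe_le_converse_descendant:
  assumes central: "safe_centralized A" and GFG_A: "\<forall>a \<in> states A. GFG_state A a"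
    and a: "a \<in> states A" and b: "b \<in> states B" and le: "safe_le A a B b"
  obtains a' where "(a, a') \<in> (nacc_step A)\<^sup>*" "a' \<in> states A" "safe_le B b A a'"
proof -
  interpret BA: det_normal_pair B A
    using det_normal_pair_swap det_normal_pair_axioms by blast
  obtain b2 a2 where b2: "(b, b2) \<in> (nacc_step B)\<^sup>*" "b2 \<in> states B"
    and a2: "a2 \<in> states A" "safe_le B b2 A a2"
    using BA.exists_safe_le_descendant[OF b a _ bspec[OF GFG_A a]] le by (auto simp: safe_le_def)
  have "(b2, b) \<in> (nacc_step B)\<^sup>*" using b2(1) B.normal by (simp add: normal_def)
  then obtain y where y: "safe_path B b2 y b"
    using rtrancl_nacc_step_iff_safe_path[OF B.wf b2(2)] by blast
  obtain a' where a': "safe_path A a2 y a'" "safe_le B b A a'"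
    using BA.safe_le_safe_path[OF b2(2) a2 y] by blast
  have "a' \<in> states A" using safe_path_in_states[OF A.wf a2(1) a'(1)] .
  moreover have "safe_le A a A a'" using le a'(2) by (rule safe_le_trans)
  ultimately have "(a, a') \<in> (nacc_step A)\<^sup>*"
    using central a by (simp add: safe_centralized_def)
  then show thesis using that \<open>a' \<in> states A\<close> a'(2) by blast
qed

(* Take a dominated safe descendant with \<subseteq>-maximal safe language. *)

lemma exists_strongly_equiv_descendant:
  assumes central_A: "safe_centralized A" and central_B: "safe_centralized B"
    and GFG_A: "\<forall>a \<in> states A. GFG_state A a" and GFG_B: "\<forall>b \<in> states B. GFG_state B b"
    and p: "p \<in> states A" and q: "q \<in> states B" and eq: "state_lang A p = state_lang B q"
  obtains r q' where "(p, r) \<in> (nacc_step A)\<^sup>*" "r \<in> states A" "q' \<in> states B"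
    "strongly_equiv A r B q'"
proof -
  interpret BA: det_normal_pair B A
    using det_normal_pair_swap det_normal_pair_axioms by blast
  define R where "R = {r \<in> states A. (p, r) \<in> (nacc_step A)\<^sup>* \<and> (\<exists>q \<in> states B. safe_le A r B q)}"
  have "finite (safe_lang A ` R)"
    using A.wf by (simp add: R_def wf_tNCW_def)
  moreover have "R \<noteq> {}"
  proof -
    obtain p' q' where "(p, p') \<in> (nacc_step A)\<^sup>*" "p' \<in> states A" "q' \<in> states B"
      "safe_le A p' B q'"
      using exists_safe_le_descendant[OF p q eq bspec[OF GFG_B q]] by blast
    then show ?thesis by (auto simp: R_def)
  qed
  ultimately obtain r where r: "r \<in> R"
    and max: "\<And>r'. r' \<in> R \<Longrightarrow> safe_lang A r \<subseteq> safe_lang A r' \<Longrightarrow> safe_lang A r = safe_lang A r'"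
    using finite_has_maximal[of "safe_lang A ` R"] by blast
  obtain q1 where q1: "q1 \<in> states B" "safe_le A r B q1" and r_reach: "(p, r) \<in> (nacc_step A)\<^sup>*"
    and r_in: "r \<in> states A"
    using r by (auto simp: R_def)
  obtain r' where r': "(r, r') \<in> (nacc_step A)\<^sup>*" "r' \<in> states A" "safe_le B q1 A r'"
    using safe_le_converse_descendant[OF central_A GFG_A r_in q1] .
  obtain q2 where "(q1, q2) \<in> (nacc_step B)\<^sup>*" "q2 \<in> states B" "safe_le A r' B q2"
    using BA.safe_le_converse_descendant[OF central_B GFG_B q1(1) r'(2,3)] .
  moreover have "(p, r') \<in> (nacc_step A)\<^sup>*" using r_reach r'(1) by (rule rtrancl_trans)
  ultimately have "r' \<in> R"
    using r'(2) unfolding R_def by blast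
  moreover have "safe_lang A r \<subseteq> safe_lang A r'"
    using q1(2) r'(3) by (auto simp: safe_le_def)
  ultimately have "safe_lang A r = safe_lang A r'"
    by (rule max)
  then have "strongly_equiv A r B q1"
    using q1(2) r'(3) by (auto simp: safe_le_def strongly_equiv_def)
  then show thesis using that r_reach r_in q1(1) by blast
qed

lemma strongly_equiv_partner:
  assumes "safe_centralized A" "safe_centralized B"
    and "\<forall>a \<in> states A. GFG_state A a" "\<forall>b \<in> states B. GFG_state B b"
    and p: "p \<in> states A" and "q \<in> states B" "state_lang A p = state_lang B q"
  obtains q' where "q' \<in> states B" "strongly_equiv A p B q'"
proof -
  obtain r q1 where r: "(p, r) \<in> (nacc_step A)\<^sup>*" "r \<in> states A" and q1: "q1 \<in> states B"
    and equiv: "strongly_equiv A r B q1"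
    using exists_strongly_equiv_descendant[OF assms] .
  have "(r, p) \<in> (nacc_step A)\<^sup>*" using r(1) A.normal by (simp add: normal_def)
  then obtain y where y: "safe_path A r y p"
    using rtrancl_nacc_step_iff_safe_path[OF A.wf r(2)] by blast
  obtain q' where "safe_path B q1 y q'" "safe_le A p B q'" "safe_le B q' A p"
    using safe_le_safe_path[OF r(2) q1 _ y] equiv by (auto simp: strongly_equiv_iff_safe_le)
  moreover from this(1) have "q' \<in> states B" using safe_path_in_states[OF B.wf q1] by blast
  ultimately show thesis using that by (simp add: strongly_equiv_iff_safe_le)
qed

lemma reachable_state_lang_partner:
  assumes "lang A = lang B" "reachable A p"
  obtains q where "q \<in> states B" "state_lang A p = state_lang B q"
proof -
  obtain x where x: "path A (init A) x p" using reachable_imp_path[OF assms(2)] by blast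
  have init: "init A \<in> states A" "init B \<in> states B"
    using A.wf B.wf by (simp_all add: wf_tNCW_def)
  have "x \<in> lists (alph B)" using path_lists[OF x] same_alph by simp
  then obtain q where q: "path B (init B) x q"
    using path_exists[OF B.wf init(2)] by blast
  have "state_lang A p = state_lang B q"
    using path_state_lang_eq[OF A.wf A.sem_det B.wf B.sem_det init _ x q] assms(1)
    by (simp add: lang_eq_state_lang_init)
  then show thesis using that path_in_states[OF B.wf init(2) q] by blast
qed

lemma strongly_equiv_partner_if_nice:
  assumes "nice A" "nice B" "minimal_GFG A" "minimal_GFG B" "lang A = lang B" "p \<in> states A"
  shows "\<exists>q \<in> states B. strongly_equiv A p B q"
proof -
  obtain q0 where "q0 \<in> states B" "state_lang A p = state_lang B q0"
    using reachable_state_lang_partner[OF assms(5)] assms(1,6) by (auto simp: nice_def)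
  moreover have "\<forall>a \<in> states A. GFG_state A a" "\<forall>b \<in> states B. GFG_state B b"
    using assms(1,2) by (simp_all add: nice_def)
  ultimately obtain q where "q \<in> states B" "strongly_equiv A p B q"
    using strongly_equiv_partner[OF A.safe_centralized_if_minimal_GFG[OF assms(3)]
        B.safe_centralized_if_minimal_GFG[OF assms(4)] _ _ assms(6)] by blast
  then show ?thesis by blast
qed

end

lemma strongly_equiv_bijection:
  assumes min_A: "safe_minimal A" and min_B: "safe_minimal B"
    and AB: "\<And>p. p \<in> states A \<Longrightarrow> \<exists>q \<in> states B. strongly_equiv A p B q"
    and BA: "\<And>q. q \<in> states B \<Longrightarrow> \<exists>p \<in> states A. strongly_equiv B q A p"
  obtains \<kappa> where "bij_betw \<kappa> (states A) (states B)"
    "\<And>p. p \<in> states A \<Longrightarrow> strongly_equiv A p B (\<kappa> p)"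
proof -
  define \<kappa> where "\<kappa> p = (SOME q. q \<in> states B \<and> strongly_equiv A p B q)" for p
  have \<kappa>: "\<kappa> p \<in> states B \<and> strongly_equiv A p B (\<kappa> p)" if "p \<in> states A" for p
    using someI_ex[of "\<lambda>q. q \<in> states B \<and> strongly_equiv A p B q"] AB[OF that]
    by (auto simp: \<kappa>_def)
  have "inj_on \<kappa> (states A)"
  proof (rule inj_onI)
    fix p p' assume "p \<in> states A" "p' \<in> states A" "\<kappa> p = \<kappa> p'"
    then show "p = p'"
      using min_A \<kappa> strongly_equiv_sym strongly_equiv_trans by (metis safe_minimal_def)
  qed
  moreover have "\<kappa> ` states A = states B"
  proof
    show "\<kappa> ` states A \<subseteq> states B" using \<kappa> by blast
    show "states B \<subseteq> \<kappa> ` states A"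
    proof
      fix q assume q: "q \<in> states B"
      obtain p where "p \<in> states A" "strongly_equiv B q A p"
        using BA[OF q] by blast
      then have p: "p \<in> states A" "strongly_equiv A p B q"
        by (simp_all add: strongly_equiv_sym)
      then have "\<kappa> p = q"
        using min_B q \<kappa> strongly_equiv_sym strongly_equiv_trans by (metis safe_minimal_def)
      then show "q \<in> \<kappa> ` states A" using p(1) by blast
    qed
  qed
  ultimately show thesis using that \<kappa> by (simp add: bij_betw_def)
qed

lemma alpha_maximal_delta_acc_iff:
  assumes "alpha_maximal_uth A" "q \<in> states A" "\<sigma> \<in> alph A" "x \<in> states A"
  shows "x \<in> delta_acc A q \<sigma> \<longleftrightarrow>
    delta_nacc A q \<sigma> = {} \<and> (\<exists>s \<in> trans A q \<sigma>. state_lang A x = state_lang A s)"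
proof
  assume x: "x \<in> delta_acc A q \<sigma>"
  then have "delta_nacc A q \<sigma> = {}"
    using assms(1-3) unfolding alpha_maximal_uth_def alpha_homogenous_def by blast
  then show "delta_nacc A q \<sigma> = {} \<and> (\<exists>s \<in> trans A q \<sigma>. state_lang A x = state_lang A s)"
    using x by (auto simp: delta_acc_def)
next
  assume x: "delta_nacc A q \<sigma> = {} \<and> (\<exists>s \<in> trans A q \<sigma>. state_lang A x = state_lang A s)"
  then have "allowed A q \<sigma> x"
    using assms(2-4) by (auto simp: allowed_def equiv_st_def state_lang_def Delta_def)
  then have "x \<in> trans A q \<sigma>"
    using assms(1-4) x unfolding alpha_maximal_uth_def by (auto simp: Delta_def)
  then show "x \<in> delta_acc A q \<sigma>"
    using x by (auto simp: delta_acc_def delta_nacc_def)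
qed

context det_normal_pair
begin

lemma equiv_successor_iff:
  assumes "q \<in> states A" "p \<in> states B" "state_lang A q = state_lang B p"
    and "state_lang A x = state_lang B y" "\<sigma> \<in> alph A"
  shows "(\<exists>s \<in> trans A q \<sigma>. state_lang A x = state_lang A s) \<longleftrightarrow>
    (\<exists>t \<in> trans B p \<sigma>. state_lang B y = state_lang B t)"
proof -
  have \<sigma>: "\<sigma> \<in> alph B" using assms(5) same_alph by simp
  have "state_lang A s = state_lang B t" if "s \<in> trans A q \<sigma>" "t \<in> trans B p \<sigma>" for s t
    using successor_state_lang_eq[OF A.wf A.sem_det B.wf B.sem_det assms(1-3,5) \<sigma> that] .
  moreover have "trans A q \<sigma> \<noteq> {}" "trans B p \<sigma> \<noteq> {}"
    using wf_tNCW_trans_nonempty[OF A.wf assms(1,5)] wf_tNCW_trans_nonempty[OF B.wf assms(2) \<sigma>] .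
  ultimately show ?thesis using assms(4) by (metis ex_in_conv)
qed

lemma delta_nacc_preserved:
  assumes min_B: "safe_minimal B"
    and \<kappa>: "\<And>p. p \<in> states A \<Longrightarrow> \<kappa> p \<in> states B \<and> strongly_equiv A p B (\<kappa> p)"
    and q: "q \<in> states A" "q' \<in> states A" and \<sigma>: "\<sigma> \<in> alph A" and safe: "q' \<in> delta_nacc A q \<sigma>"
  shows "\<kappa> q' \<in> delta_nacc B (\<kappa> q) \<sigma>"
proof -
  obtain t where t: "t \<in> delta_nacc B (\<kappa> q) \<sigma>" "safe_le A q' B t"
    "safe_le B (\<kappa> q) A q \<Longrightarrow> safe_le B t A q'"
    using safe_le_successor[OF q(1) _ _ \<sigma> safe] \<kappa>[OF q(1)]
    by (auto simp: strongly_equiv_iff_safe_le)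
  then have "strongly_equiv A q' B t"
    using \<kappa>[OF q(1)] by (simp add: strongly_equiv_iff_safe_le)
  then have "strongly_equiv B t B (\<kappa> q')"
    using \<kappa>[OF q(2)] by (metis strongly_equiv_sym strongly_equiv_trans)
  moreover have "t \<in> states B"
    using t(1) wf_tNCW_delta_nacc_in_states[OF B.wf] \<kappa>[OF q(1)] \<sigma> same_alph by blast
  ultimately have "t = \<kappa> q'"
    using min_B \<kappa>[OF q(2)] by (simp add: safe_minimal_def)
  then show ?thesis using t(1) by simp
qed

lemma delta_nacc_image:
  assumes min_A: "safe_minimal A" and min_B: "safe_minimal B"
    and bij: "bij_betw \<kappa> (states A) (states B)"
    and \<kappa>: "\<And>p. p \<in> states A \<Longrightarrow> strongly_equiv A p B (\<kappa> p)"
    and q: "q \<in> states A" and \<sigma>: "\<sigma> \<in> alph A"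
  shows "delta_nacc B (\<kappa> q) \<sigma> = \<kappa> ` delta_nacc A q \<sigma>"
proof
  have \<kappa>_in: "\<kappa> p \<in> states B \<and> strongly_equiv A p B (\<kappa> p)" if "p \<in> states A" for p
    using bij_betwE[OF bij] \<kappa> that by blast
  show "\<kappa> ` delta_nacc A q \<sigma> \<subseteq> delta_nacc B (\<kappa> q) \<sigma>"
    using delta_nacc_preserved[OF min_B \<kappa>_in q _ \<sigma>] wf_tNCW_delta_nacc_in_states[OF A.wf q \<sigma>]
    by blast
  show "delta_nacc B (\<kappa> q) \<sigma> \<subseteq> \<kappa> ` delta_nacc A q \<sigma>"
  proof
    fix t assume t: "t \<in> delta_nacc B (\<kappa> q) \<sigma>"
    interpret BA: det_normal_pair B A
      using det_normal_pair_swap det_normal_pair_axioms by blast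
    define \<kappa>' where "\<kappa>' = inv_into (states A) \<kappa>"
    have \<kappa>'_in: "\<kappa>' s \<in> states A \<and> strongly_equiv B s A (\<kappa>' s)" if "s \<in> states B" for s
      using \<kappa>[of "\<kappa>' s"] bij_betw_inv_into_right[OF bij that] bij_betw_imp_surj_on[OF bij] that
        inv_into_into[of s \<kappa> "states A"] strongly_equiv_sym by (fastforce simp: \<kappa>'_def)
    have "t \<in> states B"
      using t wf_tNCW_delta_nacc_in_states[OF B.wf] \<kappa>_in[OF q] \<sigma> same_alph by blast
    then have "\<kappa>' t \<in> delta_nacc A (\<kappa>' (\<kappa> q)) \<sigma>"
      using BA.delta_nacc_preserved[OF min_A \<kappa>'_in _ _ _ t] \<kappa>'_in \<kappa>_in[OF q] \<sigma> same_alph by auto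
    moreover have "\<kappa>' (\<kappa> q) = q" "\<kappa> (\<kappa>' t) = t"
      using bij_betw_inv_into_left[OF bij q] bij_betw_inv_into_right[OF bij \<open>t \<in> states B\<close>]
      by (simp_all add: \<kappa>'_def)
    ultimately show "t \<in> \<kappa> ` delta_nacc A q \<sigma>" by (metis imageI)
  qed
qed

lemma isomorphic_if_strongly_equiv_bij:
  assumes max_A: "alpha_maximal_uth A" and max_B: "alpha_maximal_uth B"
    and min_A: "safe_minimal A" and min_B: "safe_minimal B"
    and bij: "bij_betw \<kappa> (states A) (states B)"
    and \<kappa>: "\<And>p. p \<in> states A \<Longrightarrow> strongly_equiv A p B (\<kappa> p)"
  shows "isomorphic A B"
  unfolding isomorphic_def
proof (intro exI[of _ \<kappa>] conjI bij ballI)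
  fix q q' \<sigma> assume q: "q \<in> states A" "q' \<in> states A" and \<sigma>: "\<sigma> \<in> alph A"
  have image: "delta_nacc B (\<kappa> q) \<sigma> = \<kappa> ` delta_nacc A q \<sigma>"
    by (rule delta_nacc_image[OF min_A min_B bij \<kappa> q(1) \<sigma>])
  show nacc: "q' \<in> delta_nacc A q \<sigma> \<longleftrightarrow> \<kappa> q' \<in> delta_nacc B (\<kappa> q) \<sigma>"
    using image inj_on_image_mem_iff[OF bij_betw_imp_inj_on[OF bij] q(2)
        wf_tNCW_delta_nacc_in_states[OF A.wf q(1) \<sigma>]] by simp
  have \<kappa>q: "\<kappa> q \<in> states B" "\<kappa> q' \<in> states B"
    using bij_betwE[OF bij] q by blast+
  have eq: "state_lang A q = state_lang B (\<kappa> q)" "state_lang A q' = state_lang B (\<kappa> q')"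
    using \<kappa> q by (simp_all add: strongly_equiv_def)
  have "q' \<in> delta_acc A q \<sigma> \<longleftrightarrow>
      delta_nacc A q \<sigma> = {} \<and> (\<exists>s \<in> trans A q \<sigma>. state_lang A q' = state_lang A s)"
    by (rule alpha_maximal_delta_acc_iff[OF max_A q(1) \<sigma> q(2)])
  also have "\<dots> \<longleftrightarrow> delta_nacc B (\<kappa> q) \<sigma> = {} \<and>
      (\<exists>t \<in> trans B (\<kappa> q) \<sigma>. state_lang B (\<kappa> q') = state_lang B t)"
    using image equiv_successor_iff[OF q(1) \<kappa>q(1) eq \<sigma>] by simp
  also have "\<dots> \<longleftrightarrow> \<kappa> q' \<in> delta_acc B (\<kappa> q) \<sigma>"
    using alpha_maximal_delta_acc_iff[OF max_B \<kappa>q(1) _ \<kappa>q(2)] \<sigma> same_alph by simp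
  finally show "q' \<in> delta_acc A q \<sigma> \<longleftrightarrow> \<kappa> q' \<in> delta_acc B (\<kappa> q) \<sigma>" .
qed

end

theorem mainTheorem4:
  fixes C1 :: "('q1, 'a) tNCW" and C2 :: "('q2, 'a) tNCW"
  assumes "wf_tNCW C1" and "wf_tNCW C2"
    and "alph C1 = alph C2"
    and "nice C1" and "nice C2"
    and "GFG C1" and "GFG C2"
    and "lang C1 = lang C2"
    and "minimal_GFG C1" and "minimal_GFG C2"
    and "alpha_maximal_uth C1" and "alpha_maximal_uth C2"
  shows "isomorphic C1 C2"
proof -
  interpret C12: det_normal_pair C1 C2
    using assms(1-5)
    by (simp add: det_normal_pair_def det_normal_pair_axioms_def det_normal_tNCW_def nice_def)
  interpret C21: det_normal_pair C2 C1
    using det_normal_pair_swap C12.det_normal_pair_axioms by blast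
  have safe_minimal: "safe_minimal C1" "safe_minimal C2"
    using C12.A.safe_minimal_if_minimal_GFG C12.B.safe_minimal_if_minimal_GFG assms(9,10) by blast+
  obtain \<kappa> where "bij_betw \<kappa> (states C1) (states C2)"
    "\<And>p. p \<in> states C1 \<Longrightarrow> strongly_equiv C1 p C2 (\<kappa> p)"
    using strongly_equiv_bijection[OF safe_minimal
        C12.strongly_equiv_partner_if_nice[OF assms(4,5,9,10,8)]
        C21.strongly_equiv_partner_if_nice[OF assms(5,4,10,9) assms(8)[symmetric]]] by blast
  then show ?thesis
    using C12.isomorphic_if_strongly_equiv_bij[OF assms(11,12) safe_minimal] by blast
qed

end
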